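(* For every $\alpha\in c_0(\mathbb{Z}_{\ge0})$ there exists a unique derivation $d_\alpha:\mathcal{A}\to A$ such that $d_\alpha(U)=U\alpha(\mathbb{K})$, $d_\alpha(U^* )=-\alpha(\mathbb{K})U^*$, and $d_\alpha(a)=0$ for every $a\in\mathcal{A}_0$. Moreover $d_\alpha$ is approximately inner and invariant.
   Context: Setup: $G$ is an infinite compact (Hausdorff) abelian group, written additively, and $x_1\in G$ generates a dense cyclic subgroup; $x_n=nx_1$. $\widehat G$ is the group of continuous characters and $\mathcal F$ their linear span. Let $H_+=\ell^2(\mathbb{Z}_{\ge 0})$ with canonical basis $\{E_k^+\}$; $UE_k^+=E_{k+1}^+$, $M^+_fE^+_k=f(x_k)E^+_k$, $\mathbb{K}E_k^+=kE_k^+$, and for a bounded sequence $\alpha$, $\alpha(\mathbb{K})E_k^+=\alpha(k)E_k^+$. $A=C^*(U,M^+_f:f\in C(G))$, $\mathcal{A}$ is the $*$-subalgebra generated by $U,U^*,M^+_\chi$ ($\chi\in\widehat G$), and $\mathcal{A}_0=\{a(\mathbb{K})+M^+_f: a\in c_{00}(\mathbb{Z}_{\ge0}), f\in\mathcal F\}$ is the set of diagonal elements of $\mathcal A$ ($c_{00}$ = eventually zero sequences). For $\theta\in\mathbb{R}$ let $\rho_\theta(a)=e^{i\theta\mathbb{K}}ae^{-i\theta\mathbb{K}}$. A derivation $d$ (linear, Leibniz) is invariant if $\rho_\theta^{-1}(d(\rho_\theta(a)))=d(a)$ for all $\theta,a$, and approximately inner if $d(a)=\lim_j[x_j,a]$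 in norm for some $x_j\in A$ and all $a\in\mathcal{A}$. *)

theory Defs
  imports "HOL-Analysis.Analysis"
begin

text \<open>Vectors of H_+ are square-summable sequences nat => complex; E_k^+ is the k-th unit
  sequence. Operators are represented as functions on sequences which are complex linear and
  bounded on l2 and (to make equality of operators meaningful) vanish outside l2.\<close>

type_synonym seq = "nat \<Rightarrow> complex"
type_synonym op = "seq \<Rightarrow> seq"

definition l2 :: "seq set" where
  "l2 = {x. summable (\<lambda>n. (cmod (x n))\<^sup>2)}"

definition l2norm :: "seq \<Rightarrow> real" where
  "l2norm x = sqrt (\<Sum>n. (cmod (x n))\<^sup>2)"

definition l2inner :: "seq \<Rightarrow> seq \<Rightarrow> complex" where
  "l2inner x y = (\<Sum>n. x n * cnj (y n))"

definition is_op :: "op \<Rightarrow> bool" where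
  "is_op T \<longleftrightarrow>
     (\<forall>x\<in>l2. T x \<in> l2) \<and>
     (\<forall>x\<in>l2. \<forall>y\<in>l2. \<forall>c::complex. T (\<lambda>n. c * x n + y n) = (\<lambda>n. c * T x n + T y n)) \<and>
     (\<exists>C. \<forall>x\<in>l2. l2norm (T x) \<le> C * l2norm x) \<and>
     (\<forall>x. x \<notin> l2 \<longrightarrow> T x = (\<lambda>n. 0))"

definition opnorm :: "op \<Rightarrow> real" where
  "opnorm T = Sup {l2norm (T x) | x. x \<in> l2 \<and> l2norm x \<le> 1}"

definition op_zero :: op where "op_zero = (\<lambda>x n. 0)"
definition op_add :: "op \<Rightarrow> op \<Rightarrow> op" where "op_add S T = (\<lambda>x n. S x n + T x n)"
definition op_scale :: "complex \<Rightarrow> op \<Rightarrow> op" where "op_scale c T = (\<lambda>x n. c * T x n)"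
definition op_neg :: "op \<Rightarrow> op" where "op_neg T = (\<lambda>x n. - T x n)"
definition op_diff :: "op \<Rightarrow> op \<Rightarrow> op" where "op_diff S T = (\<lambda>x n. S x n - T x n)"
definition op_mult :: "op \<Rightarrow> op \<Rightarrow> op" where "op_mult S T = S \<circ> T"

definition is_adjoint :: "op \<Rightarrow> op \<Rightarrow> bool" where
  "is_adjoint T T' \<longleftrightarrow> (\<forall>x\<in>l2. \<forall>y\<in>l2. l2inner (T x) y = l2inner x (T' y))"

definition adj :: "op \<Rightarrow> op" where
  "adj T = (THE T'. is_op T' \<and> is_adjoint T T')"

text \<open>Diagonal operator E_k^+ |-> a(k) E_k^+ (used for a(K), M_f^+ and e^{i theta K}).\<close>
definition diag :: "(nat \<Rightarrow> complex) \<Rightarrow> op" where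
  "diag a = (\<lambda>x. if x \<in> l2 then (\<lambda>k. a k * x k) else (\<lambda>n. 0))"

definition shiftU :: op where
  "shiftU = (\<lambda>x. if x \<in> l2 then (\<lambda>k. if k = 0 then 0 else x (k - 1)) else (\<lambda>n. 0))"

definition expK :: "real \<Rightarrow> op" where
  "expK \<theta> = diag (\<lambda>k. exp (\<i> * complex_of_real (\<theta> * real k)))"

definition rho :: "real \<Rightarrow> op \<Rightarrow> op" where
  "rho \<theta> a = op_mult (expK \<theta>) (op_mult a (expK (- \<theta>)))"

definition rho_inv :: "real \<Rightarrow> op \<Rightarrow> op" where
  "rho_inv \<theta> b = op_mult (expK (- \<theta>)) (op_mult b (expK \<theta>))"

inductive_set star_alg :: "op set \<Rightarrow> op set" for X :: "op set" where
  gen: "T \<in> X \<Longrightarrow> T \<in> star_alg X"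
| add: "S \<in> star_alg X \<Longrightarrow> T \<in> star_alg X \<Longrightarrow> op_add S T \<in> star_alg X"
| scale: "T \<in> star_alg X \<Longrightarrow> op_scale c T \<in> star_alg X"
| mult: "S \<in> star_alg X \<Longrightarrow> T \<in> star_alg X \<Longrightarrow> op_mult S T \<in> star_alg X"
| star: "T \<in> star_alg X \<Longrightarrow> adj T \<in> star_alg X"

definition norm_closure :: "op set \<Rightarrow> op set" where
  "norm_closure S = {T. is_op T \<and> (\<forall>\<epsilon>>0. \<exists>R\<in>S. opnorm (op_diff T R) < \<epsilon>)}"

definition nmul :: "nat \<Rightarrow> 'g::ab_group_add \<Rightarrow> 'g" where
  "nmul n x = ((\<lambda>y. x + y) ^^ n) 0"

definition zmul :: "int \<Rightarrow> 'g::ab_group_add \<Rightarrow> 'g" where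
  "zmul k x = (if 0 \<le> k then nmul (nat k) x else - nmul (nat (- k)) x)"

definition character :: "('g::topological_ab_group_add \<Rightarrow> complex) \<Rightarrow> bool" where
  "character chi \<longleftrightarrow> continuous_on UNIV chi \<and> (\<forall>a b. chi (a + b) = chi a * chi b) \<and> (\<forall>a. cmod (chi a) = 1)"

definition char_span :: "('g::topological_ab_group_add \<Rightarrow> complex) set" where
  "char_span = {f. \<exists>X c. finite X \<and> X \<subseteq> {chi. character chi} \<and> f = (\<lambda>g. \<Sum>chi\<in>X. c chi * chi g)}"

definition Mplus :: "'g::ab_group_add \<Rightarrow> ('g \<Rightarrow> complex) \<Rightarrow> op" where
  "Mplus x1 f = diag (\<lambda>k. f (nmul k x1))"

definition algA :: "'g::topological_ab_group_add \<Rightarrow> op set" where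
  "algA x1 = norm_closure (star_alg ({shiftU} \<union> {Mplus x1 f | f. continuous_on UNIV f}))"

definition algAc :: "'g::topological_ab_group_add \<Rightarrow> op set" where
  "algAc x1 = star_alg ({shiftU, adj shiftU} \<union> {Mplus x1 chi | chi. character chi})"

definition algA0 :: "'g::topological_ab_group_add \<Rightarrow> op set" where
  "algA0 x1 = {op_add (diag a) (Mplus x1 f) | a f. finite {k. a k \<noteq> 0} \<and> f \<in> char_span}"

definition is_derivation :: "op set \<Rightarrow> op set \<Rightarrow> (op \<Rightarrow> op) \<Rightarrow> bool" where
  "is_derivation D B d \<longleftrightarrow>
     (\<forall>a\<in>D. d a \<in> B) \<and>
     (\<forall>a\<in>D. \<forall>b\<in>D. d (op_add a b) = op_add (d a) (d b)) \<and>
     (\<forall>a\<in>D. \<forall>c. d (op_scale c a) = op_scale c (d a)) \<and>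
     (\<forall>a\<in>D. \<forall>b\<in>D. d (op_mult a b) = op_add (op_mult (d a) b) (op_mult a (d b)))"

definition invariant_der :: "op set \<Rightarrow> (op \<Rightarrow> op) \<Rightarrow> bool" where
  "invariant_der D d \<longleftrightarrow> (\<forall>\<theta>. \<forall>a\<in>D. rho_inv \<theta> (d (rho \<theta> a)) = d a)"

definition approx_inner :: "op set \<Rightarrow> op set \<Rightarrow> (op \<Rightarrow> op) \<Rightarrow> bool" where
  "approx_inner D B d \<longleftrightarrow>
     (\<exists>x :: nat \<Rightarrow> op. (\<forall>j. x j \<in> B) \<and>
        (\<forall>a\<in>D. (\<lambda>j. opnorm (op_diff (op_diff (op_mult (x j) a) (op_mult a (x j))) (d a)))
                   \<longlonglongrightarrow> 0))"

definition dalpha_conds :: "'g::topological_ab_group_add \<Rightarrow> (nat \<Rightarrow> complex) \<Rightarrow> (op \<Rightarrow> op) \<Rightarrow> bool" where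
  "dalpha_conds x1 \<alpha> d \<longleftrightarrow>
     d shiftU = op_mult shiftU (diag \<alpha>) \<and>
     d (adj shiftU) = op_neg (op_mult (diag \<alpha>) (adj shiftU)) \<and>
     (\<forall>a\<in>algA0 x1. d a = op_zero)"

end

theory Submission
  imports Defs
begin

text \<open>
  Every element of the *-algebra generated by U, U* and the M_chi is banded: its matrix in the basis
  E_k is supported on |m - n| \<le> R with bounded entries, and its adjoint is again such an element.
  With beta(m) = alpha(0) + ... + alpha(m - 1), d_alpha multiplies the (m, n) entry by
  beta(m) - beta(n). On a band of width R this weight is at most R sup |alpha|, so d_alpha a is
  bounded, and the Leibniz rule is the cocycle identity
  beta(m) - beta(n) = (beta(m) - beta(k)) + (beta(k) - beta(n)). Diagonal operators are killed,
  and U, U* are mapped to U alpha(K), -alpha(K) U*. Derivations agreeing on the generators and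
  their adjoints agree on the generated *-algebra, which gives uniqueness.

  Let beta_j be the partial sums of alpha truncated at j. Then x_j = beta_j(K) is a finite
  combination of the projections U^k U*^k, and the entries of [x_j, a] - d_alpha a carry the
  partial sums of the tail of alpha beyond j, so its norm tends to 0 when alpha tends to 0. This
  shows both that d_alpha a lies in A and that d_alpha is approximately inner. Finally rho_theta
  multiplies the (m, n) entry by e^(i theta (m - n)), which commutes with the weighting.
\<close>

definition unit_vec :: "nat \<Rightarrow> seq" where "unit_vec n = (\<lambda>k. if k = n then 1 else 0)"

lemma l2_iff: "x \<in> l2 \<longleftrightarrow> summable (\<lambda>n. (cmod (x n))\<^sup>2)"
  by (simp add: l2_def)

lemma zero_l2[simp]: "(\<lambda>n. 0) \<in> l2"
  by (simp add: l2_def)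

lemma unit_vec_l2[simp]: "unit_vec n \<in> l2"
  unfolding l2_iff unit_vec_def by (rule summable_finite[of "{n}"]) auto

lemma norm_add_sq_le: "(cmod (a + b))\<^sup>2 \<le> 2 * (cmod a)\<^sup>2 + 2 * (cmod b)\<^sup>2"
proof -
  have "cmod (a+b) \<le> cmod a + cmod b" by (rule norm_triangle_ineq)
  hence "(cmod (a+b))\<^sup>2 \<le> (cmod a + cmod b)\<^sup>2" by (simp add: power_mono)
  also have "\<dots> \<le> 2 * (cmod a)\<^sup>2 + 2 * (cmod b)\<^sup>2"
    using sum_squares_bound[of "cmod a" "cmod b"] by (simp add: power2_sum)
  finally show ?thesis .
qed

lemma l2_lincomb[simp]:
  assumes "x \<in> l2" "y \<in> l2" shows "(\<lambda>n. c * x n + y n) \<in> l2"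
proof -
  have s: "summable (\<lambda>n. 2 * (cmod c)\<^sup>2 * (cmod (x n))\<^sup>2 + 2 * (cmod (y n))\<^sup>2)"
    using assms by (intro summable_add summable_mult) (auto simp: l2_iff)
  show ?thesis unfolding l2_iff
    apply (rule summable_comparison_test'[OF s])
    using norm_add_sq_le[of "c * x _" "y _"] by (simp add: norm_mult power_mult_distrib mult.assoc)
qed

lemma l2_add[simp]: "x \<in> l2 \<Longrightarrow> y \<in> l2 \<Longrightarrow> (\<lambda>n. x n + y n) \<in> l2"
  using l2_lincomb[of x y 1] by simp

lemma l2_scale[simp]: "x \<in> l2 \<Longrightarrow> (\<lambda>n. c * x n) \<in> l2"
  using l2_lincomb[of x "\<lambda>n. 0" c] by simp

lemma summable_l2inner:
  assumes "x \<in> l2" "y \<in> l2" shows "summable (\<lambda>n. x n * cnj (y n))"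
proof -
  have s: "summable (\<lambda>n. (cmod (x n))\<^sup>2 + (cmod (y n))\<^sup>2)"
    using assms by (intro summable_add) (auto simp: l2_iff)
  show ?thesis
    apply (rule summable_comparison_test'[OF s])
    subgoal for n
    proof -
      have "2 * cmod (x n) * cmod (y n) \<le> (cmod (x n))\<^sup>2 + (cmod (y n))\<^sup>2" by (rule sum_squares_bound)
      moreover have "0 \<le> cmod (x n) * cmod (y n)" by simp
      moreover have "norm (x n * cnj (y n)) = cmod (x n) * cmod (y n)" by (simp add: norm_mult)
      ultimately show ?thesis by linarith
    qed
    done
qed

lemma l2inner_lincomb_left:
  assumes "x \<in> l2" "y \<in> l2" "z \<in> l2"
  shows "l2inner (\<lambda>n. c * x n + y n) z = c * l2inner x z + l2inner y z"
  unfolding l2inner_def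
  using summable_l2inner[OF assms(1,3)] summable_l2inner[OF assms(2,3)]
  by (simp add: distrib_right mult.assoc suminf_add[symmetric] suminf_mult)

lemma l2inner_lincomb_right:
  assumes "x \<in> l2" "y \<in> l2" "z \<in> l2"
  shows "l2inner z (\<lambda>n. c * x n + y n) = cnj c * l2inner z x + l2inner z y"
  unfolding l2inner_def
  using summable_l2inner[OF assms(3,1)] summable_l2inner[OF assms(3,2)]
  by (simp add: distrib_left mult.assoc mult.left_commute suminf_add[symmetric] suminf_mult)

lemma l2inner_unit_vec: "l2inner (unit_vec n) y = cnj (y n)"
  unfolding l2inner_def unit_vec_def
  by (subst suminf_finite[of "{n}"]) auto

lemma l2norm_nonneg: "x \<in> l2 \<Longrightarrow> 0 \<le> l2norm x"
  unfolding l2norm_def l2_iff by (simp add: suminf_nonneg)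

lemma l2norm_sq: "x \<in> l2 \<Longrightarrow> (l2norm x)\<^sup>2 = (\<Sum>n. (cmod (x n))\<^sup>2)"
  unfolding l2norm_def l2_iff by (simp add: suminf_nonneg)

lemma l2norm_le:
  assumes "(\<Sum>n. (cmod (y n))\<^sup>2) \<le> K\<^sup>2 * (\<Sum>n. (cmod (x n))\<^sup>2)" "K \<ge> 0"
  shows "l2norm y \<le> K * l2norm x"
proof -
  have "l2norm y \<le> sqrt (K\<^sup>2 * (\<Sum>n. (cmod (x n))\<^sup>2))"
    unfolding l2norm_def using assms(1) by (rule real_sqrt_le_mono)
  also have "\<dots> = K * l2norm x" using assms(2) by (simp add: l2norm_def real_sqrt_mult)
  finally show ?thesis .
qed

lemma l2norm_zero[simp]: "l2norm (\<lambda>n. 0) = 0"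
  by (simp add: l2norm_def)

lemma op_add_apply: "op_add S T x n = S x n + T x n" by (simp add: op_add_def)
lemma op_scale_apply: "op_scale c T x n = c * T x n" by (simp add: op_scale_def)
lemma op_mult_apply: "op_mult S T x = S (T x)" by (simp add: op_mult_def)
lemma op_diff_apply: "op_diff S T x n = S x n - T x n" by (simp add: op_diff_def)
lemma op_neg_apply: "op_neg T x n = - T x n" by (simp add: op_neg_def)

lemmas op_apply = op_add_apply op_scale_apply op_mult_apply op_diff_apply op_neg_apply

lemma is_opD:
  assumes "is_op T"
  shows "\<And>x. x \<in> l2 \<Longrightarrow> T x \<in> l2"
    and "\<And>x y c. x \<in> l2 \<Longrightarrow> y \<in> l2 \<Longrightarrow> T (\<lambda>n. c * x n + y n) = (\<lambda>n. c * T x n + T y n)"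
    and "\<And>x. x \<notin> l2 \<Longrightarrow> T x = (\<lambda>n. 0)"
  using assms unfolding is_op_def by blast+

lemma is_op_bound:
  assumes "is_op T" shows "\<exists>C\<ge>0. \<forall>x\<in>l2. l2norm (T x) \<le> C * l2norm x"
proof -
  obtain C where C: "\<forall>x\<in>l2. l2norm (T x) \<le> C * l2norm x" using assms unfolding is_op_def by blast
  have "\<forall>x\<in>l2. l2norm (T x) \<le> max C 0 * l2norm x"
  proof
    fix x assume "x \<in> l2"
    hence "0 \<le> l2norm x" by (rule l2norm_nonneg)
    hence "C * l2norm x \<le> max C 0 * l2norm x" by (simp add: mult_right_mono)
    thus "l2norm (T x) \<le> max C 0 * l2norm x" using C \<open>x \<in> l2\<close> by fastforce
  qed
  thus ?thesis by (intro exI[of _ "max C 0"]) auto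
qed

lemma is_op_zero:
  assumes "is_op T" shows "T (\<lambda>n. 0) = (\<lambda>n. 0)"
  using is_opD(2)[OF assms zero_l2 zero_l2, of "-1"] by simp

lemma is_op_scale_vec:
  assumes "is_op T" "x \<in> l2" shows "T (\<lambda>n. c * x n) = (\<lambda>n. c * T x n)"
  using is_opD(2)[OF assms(1) assms(2) zero_l2, of c] is_op_zero[OF assms(1)] by simp

lemma suminf_sq_le_of_l2norm_le:
  assumes "y \<in> l2" "x \<in> l2" "l2norm y \<le> C * l2norm x" "C \<ge> 0"
  shows "(\<Sum>n. (cmod (y n))\<^sup>2) \<le> C\<^sup>2 * (\<Sum>n. (cmod (x n))\<^sup>2)"
proof -
  have "(l2norm y)\<^sup>2 \<le> (C * l2norm x)\<^sup>2"
    using assms l2norm_nonneg[OF assms(1)] by (intro power_mono) auto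
  thus ?thesis using l2norm_sq[OF assms(1)] l2norm_sq[OF assms(2)] by (simp add: power_mult_distrib)
qed

lemma is_op_add: assumes "is_op S" "is_op T" shows "is_op (op_add S T)"
proof -
  obtain C1 where C1: "C1 \<ge> 0" "\<forall>x\<in>l2. l2norm (S x) \<le> C1 * l2norm x" using is_op_bound[OF assms(1)] by blast
  obtain C2 where C2: "C2 \<ge> 0" "\<forall>x\<in>l2. l2norm (T x) \<le> C2 * l2norm x" using is_op_bound[OF assms(2)] by blast
  have b: "l2norm (op_add S T x) \<le> sqrt (2 * C1\<^sup>2 + 2 * C2\<^sup>2) * l2norm x" if x: "x \<in> l2" for x
  proof (rule l2norm_le)
    have sx: "S x \<in> l2" "T x \<in> l2" using x assms is_opD(1) by auto
    have "(\<Sum>n. (cmod (op_add S T x n))\<^sup>2) \<le> (\<Sum>n. 2 * (cmod (S x n))\<^sup>2 + 2 * (cmod (T x n))\<^sup>2)"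
      apply (rule suminf_le)
      using norm_add_sq_le sx apply (simp add: op_add_def)
      using l2_add[OF sx] apply (simp add: op_add_def l2_iff)
      using sx by (intro summable_add summable_mult) (auto simp: l2_iff)
    also have "\<dots> = 2 * (\<Sum>n. (cmod (S x n))\<^sup>2) + 2 * (\<Sum>n. (cmod (T x n))\<^sup>2)"
      using sx by (subst suminf_add[symmetric]) (auto simp: l2_iff suminf_mult)
    also have "\<dots> \<le> 2 * (C1\<^sup>2 * (\<Sum>n. (cmod (x n))\<^sup>2)) + 2 * (C2\<^sup>2 * (\<Sum>n. (cmod (x n))\<^sup>2))"
      using suminf_sq_le_of_l2norm_le[OF sx(1) x] suminf_sq_le_of_l2norm_le[OF sx(2) x] C1 C2 x by (intro add_mono) auto
    also have "\<dots> = (sqrt (2 * C1\<^sup>2 + 2 * C2\<^sup>2))\<^sup>2 * (\<Sum>n. (cmod (x n))\<^sup>2)"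
      by (simp add: algebra_simps)
    finally show "(\<Sum>n. (cmod (op_add S T x n))\<^sup>2) \<le> (sqrt (2 * C1\<^sup>2 + 2 * C2\<^sup>2))\<^sup>2 * (\<Sum>n. (cmod (x n))\<^sup>2)" .
  qed auto
  show ?thesis unfolding is_op_def
  proof (intro conjI ballI allI impI)
    fix x assume "x \<in> l2" thus "op_add S T x \<in> l2" using assms is_opD(1)[of S x] is_opD(1)[of T x]
      by (simp add: op_add_def)
  next
    fix x y c assume "x \<in> l2" "y \<in> l2"
    thus "op_add S T (\<lambda>n. c * x n + y n) = (\<lambda>n. c * op_add S T x n + op_add S T y n)"
      using assms by (simp add: op_add_def is_opD(2)) (simp add: algebra_simps)
  next
    show "\<exists>C. \<forall>x\<in>l2. l2norm (op_add S T x) \<le> C * l2norm x" using b by blast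
  next
    fix x assume "x \<notin> l2" thus "op_add S T x = (\<lambda>n. 0)" using assms by (simp add: op_add_def is_opD(3))
  qed
qed

lemma is_op_scale: assumes "is_op T" shows "is_op (op_scale c T)"
proof -
  obtain C where C: "C \<ge> 0" "\<forall>x\<in>l2. l2norm (T x) \<le> C * l2norm x" using is_op_bound[OF assms(1)] by blast
  have b: "l2norm (op_scale c T x) \<le> (cmod c * C) * l2norm x" if x: "x \<in> l2" for x
  proof (rule l2norm_le)
    have sx: "T x \<in> l2" using x assms is_opD(1) by auto
    have "(\<Sum>n. (cmod (op_scale c T x n))\<^sup>2) = (cmod c)\<^sup>2 * (\<Sum>n. (cmod (T x n))\<^sup>2)"
      using sx by (simp add: op_scale_def norm_mult power_mult_distrib suminf_mult l2_iff)
    also have "\<dots> \<le> (cmod c)\<^sup>2 * (C\<^sup>2 * (\<Sum>n. (cmod (x n))\<^sup>2))"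
      using suminf_sq_le_of_l2norm_le[OF sx x] C x by (intro mult_left_mono) auto
    finally show "(\<Sum>n. (cmod (op_scale c T x n))\<^sup>2) \<le> (cmod c * C)\<^sup>2 * (\<Sum>n. (cmod (x n))\<^sup>2)"
      by (simp add: power_mult_distrib)
  qed (use C in auto)
  show ?thesis unfolding is_op_def
  proof (intro conjI ballI allI impI)
    fix x assume "x \<in> l2" thus "op_scale c T x \<in> l2" using assms is_opD(1)[of T x]
      by (simp add: op_scale_def)
  next
    fix x y d assume "x \<in> l2" "y \<in> l2"
    thus "op_scale c T (\<lambda>n. d * x n + y n) = (\<lambda>n. d * op_scale c T x n + op_scale c T y n)"
      using assms by (simp add: op_scale_def is_opD(2)) (simp add: algebra_simps)
  next
    show "\<exists>C. \<forall>x\<in>l2. l2norm (op_scale c T x) \<le> C * l2norm x" using b by blast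
  next
    fix x assume "x \<notin> l2" thus "op_scale c T x = (\<lambda>n. 0)" using assms by (simp add: op_scale_def is_opD(3))
  qed
qed

lemma is_op_mult: assumes "is_op S" "is_op T" shows "is_op (op_mult S T)"
proof -
  obtain C1 where C1: "C1 \<ge> 0" "\<forall>x\<in>l2. l2norm (S x) \<le> C1 * l2norm x" using is_op_bound[OF assms(1)] by blast
  obtain C2 where C2: "C2 \<ge> 0" "\<forall>x\<in>l2. l2norm (T x) \<le> C2 * l2norm x" using is_op_bound[OF assms(2)] by blast
  have b: "l2norm (op_mult S T x) \<le> (C1 * C2) * l2norm x" if x: "x \<in> l2" for x
  proof -
    have "l2norm (S (T x)) \<le> C1 * l2norm (T x)" using C1 x assms(2) is_opD(1) by blast
    also have "\<dots> \<le> C1 * (C2 * l2norm x)" using C1 C2 x by (intro mult_left_mono) auto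
    finally show ?thesis by (simp add: op_mult_def)
  qed
  show ?thesis unfolding is_op_def
  proof (intro conjI ballI allI impI)
    fix x assume "x \<in> l2" thus "op_mult S T x \<in> l2" using assms is_opD(1) by (simp add: op_mult_def)
  next
    fix x y d assume "x \<in> l2" "y \<in> l2"
    thus "op_mult S T (\<lambda>n. d * x n + y n) = (\<lambda>n. d * op_mult S T x n + op_mult S T y n)"
      using assms by (simp add: op_mult_def is_opD(1,2))
  next
    show "\<exists>C. \<forall>x\<in>l2. l2norm (op_mult S T x) \<le> C * l2norm x" using b by blast
  next
    fix x assume "x \<notin> l2" thus "op_mult S T x = (\<lambda>n. 0)" using assms by (simp add: op_mult_def is_opD(3) is_op_zero)
  qed
qed

lemma is_op_diag: assumes "\<And>k. cmod (b k) \<le> B" shows "is_op (diag b)"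
proof -
  have B: "B \<ge> 0" using assms[of 0] norm_ge_zero[of "b 0"] by linarith
  have sq: "(cmod (b k * x k))\<^sup>2 \<le> B\<^sup>2 * (cmod (x k))\<^sup>2" for x k
    using assms[of k] by (simp add: norm_mult power_mult_distrib mult_right_mono power_mono)
  have l: "(\<lambda>k. b k * x k) \<in> l2" if "x \<in> l2" for x
    unfolding l2_iff apply (rule summable_comparison_test'[of "\<lambda>k. B\<^sup>2 * (cmod (x k))\<^sup>2" 0])
    using that sq by (auto simp: l2_iff intro: summable_mult)
  have b: "l2norm (diag b x) \<le> B * l2norm x" if x: "x \<in> l2" for x
  proof (rule l2norm_le)
    show "(\<Sum>n. (cmod (diag b x n))\<^sup>2) \<le> B\<^sup>2 * (\<Sum>n. (cmod (x n))\<^sup>2)"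
      using x l[OF x] sq by (simp add: diag_def suminf_mult[symmetric] l2_iff suminf_le summable_mult)
  qed (rule B)
  show ?thesis unfolding is_op_def
  proof (intro conjI ballI allI impI)
    fix x assume "x \<in> l2" thus "diag b x \<in> l2" using l by (simp add: diag_def)
  next
    fix x y d assume "x \<in> l2" "y \<in> l2"
    thus "diag b (\<lambda>n. d * x n + y n) = (\<lambda>n. d * diag b x n + diag b y n)"
      by (simp add: diag_def algebra_simps)
  next
    show "\<exists>C. \<forall>x\<in>l2. l2norm (diag b x) \<le> C * l2norm x" using b by blast
  next
    fix x assume "x \<notin> l2" thus "diag b x = (\<lambda>n. 0)" by (simp add: diag_def)
  qed
qed

lemma shiftU_l2: assumes "x \<in> l2" shows "(\<lambda>k. if k = 0 then 0 else x (k - 1)) \<in> l2"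
   and "(\<Sum>k. (cmod (if k = 0 then 0 else x (k - 1)))\<^sup>2) = (\<Sum>k. (cmod (x k))\<^sup>2)"
proof -
  let ?f = "\<lambda>k. (cmod (if k = 0 then 0 else x (k - 1)))\<^sup>2"
  have "(\<lambda>k. ?f (Suc k)) = (\<lambda>k. (cmod (x k))\<^sup>2)" by simp
  hence s: "summable (\<lambda>k. ?f (Suc k))" using assms by (simp add: l2_iff)
  hence s2: "summable ?f" using summable_Suc_iff[of ?f] by blast
  thus "(\<lambda>k. if k = 0 then 0 else x (k - 1)) \<in> l2" by (simp add: l2_iff)
  show "suminf ?f = (\<Sum>k. (cmod (x k))\<^sup>2)"
    using suminf_split_head[OF s2] by simp
qed

lemma is_op_shiftU: "is_op shiftU"
  unfolding is_op_def
proof (intro conjI ballI allI impI)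
  fix x assume "x \<in> l2" thus "shiftU x \<in> l2" using shiftU_l2 by (simp add: shiftU_def)
next
  fix x y d assume "x \<in> l2" "y \<in> l2"
  thus "shiftU (\<lambda>n. d * x n + y n) = (\<lambda>n. d * shiftU x n + shiftU y n)"
    by (auto simp: shiftU_def)
next
  show "\<exists>C. \<forall>x\<in>l2. l2norm (shiftU x) \<le> C * l2norm x"
    by (intro exI[of _ 1]) (simp add: shiftU_def l2norm_def shiftU_l2)
next
  fix x assume "x \<notin> l2" thus "shiftU x = (\<lambda>n. 0)" by (simp add: shiftU_def)
qed

definition backshift :: op where
  "backshift = (\<lambda>x. if x \<in> l2 then (\<lambda>k. x (Suc k)) else (\<lambda>n. 0))"

lemma backshift_l2: assumes "x \<in> l2" shows "(\<lambda>k. x (Suc k)) \<in> l2"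
  and "(\<Sum>k. (cmod (x (Suc k)))\<^sup>2) \<le> (\<Sum>k. (cmod (x k))\<^sup>2)"
proof -
  show "(\<lambda>k. x (Suc k)) \<in> l2" using assms summable_Suc_iff[of "\<lambda>n. (cmod (x n))\<^sup>2"] by (simp add: l2_iff)
  show "(\<Sum>k. (cmod (x (Suc k)))\<^sup>2) \<le> (\<Sum>k. (cmod (x k))\<^sup>2)"
    using suminf_split_head[of "\<lambda>k. (cmod (x k))\<^sup>2"] assms by (simp add: l2_iff)
qed

lemma is_op_backshift: "is_op backshift"
  unfolding is_op_def
proof (intro conjI ballI allI impI)
  fix x assume "x \<in> l2" thus "backshift x \<in> l2" using backshift_l2 by (simp add: backshift_def)
next
  fix x y d assume "x \<in> l2" "y \<in> l2"
  thus "backshift (\<lambda>n. d * x n + y n) = (\<lambda>n. d * backshift x n + backshift y n)"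
    by (auto simp: backshift_def)
next
  have "l2norm (backshift x) \<le> 1 * l2norm x" if "x \<in> l2" for x
    apply (rule l2norm_le) using backshift_l2[OF that] that by (auto simp: backshift_def)
  thus "\<exists>C. \<forall>x\<in>l2. l2norm (backshift x) \<le> C * l2norm x" by blast
next
  fix x assume "x \<notin> l2" thus "backshift x = (\<lambda>n. 0)" by (simp add: backshift_def)
qed

definition adjoint_pair :: "op \<Rightarrow> op \<Rightarrow> bool" where
  "adjoint_pair T T' \<longleftrightarrow> is_op T \<and> is_op T' \<and> is_adjoint T T' \<and> is_adjoint T' T"

lemma adjoint_pair_sym: "adjoint_pair T T' \<Longrightarrow> adjoint_pair T' T"
  by (auto simp: adjoint_pair_def)

lemma adjoint_unique:
  assumes "is_op A" "is_op B" "is_adjoint T A" "is_adjoint T B" "is_op T"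
  shows "A = B"
proof (rule ext)
  fix y show "A y = B y"
  proof (cases "y \<in> l2")
    case True
    show ?thesis
    proof (rule ext)
      fix n
      have "cnj (A y n) = l2inner (unit_vec n) (A y)" by (simp add: l2inner_unit_vec)
      also have "\<dots> = l2inner (T (unit_vec n)) y" using assms(3) True by (simp add: is_adjoint_def)
      also have "\<dots> = l2inner (unit_vec n) (B y)" using assms(4) True by (simp add: is_adjoint_def)
      also have "\<dots> = cnj (B y n)" by (simp add: l2inner_unit_vec)
      finally show "A y n = B y n" by simp
    qed
  next
    case False thus ?thesis using assms(1,2) is_opD(3) by metis
  qed
qed

lemma adj_eq: assumes "adjoint_pair T T'" shows "adj T = T'"
  unfolding adj_def
proof (rule the_equality)
  show "is_op T' \<and> is_adjoint T T'" using assms by (simp add: adjoint_pair_def)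
  fix A assume "is_op A \<and> is_adjoint T A"
  thus "A = T'" using adjoint_unique[of A T' T] assms by (auto simp: adjoint_pair_def)
qed

lemma is_adjoint_add:
  assumes "is_op S" "is_op T" "is_op S'" "is_op T'" "is_adjoint S S'" "is_adjoint T T'"
  shows "is_adjoint (op_add S T) (op_add S' T')"
  unfolding is_adjoint_def
proof (intro ballI)
  fix x y assume x: "x \<in> l2" and y: "y \<in> l2"
  have "l2inner (op_add S T x) y = l2inner (\<lambda>n. 1 * S x n + T x n) y" by (simp add: op_add_def)
  also have "\<dots> = l2inner (S x) y + l2inner (T x) y"
    using x y assms is_opD(1) by (subst l2inner_lincomb_left) auto
  also have "\<dots> = l2inner x (S' y) + l2inner x (T' y)" using assms(5,6) x y by (simp add: is_adjoint_def)
  also have "\<dots> = l2inner x (\<lambda>n. 1 * S' y n + T' y n)"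
    using x y assms is_opD(1) by (subst l2inner_lincomb_right) auto
  finally show "l2inner (op_add S T x) y = l2inner x (op_add S' T' y)" by (simp add: op_add_def)
qed

lemma is_adjoint_scale:
  assumes "is_op T" "is_op T'" "is_adjoint T T'"
  shows "is_adjoint (op_scale c T) (op_scale (cnj c) T')"
  unfolding is_adjoint_def
proof (intro ballI)
  fix x y assume x: "x \<in> l2" and y: "y \<in> l2"
  have "l2inner (op_scale c T x) y = l2inner (\<lambda>n. c * T x n + 0) y" by (simp add: op_scale_def)
  also have "\<dots> = c * l2inner (T x) y"
    using x y assms is_opD(1) by (subst l2inner_lincomb_left) (auto simp: l2inner_def)
  also have "\<dots> = c * l2inner x (T' y)" using assms x y by (simp add: is_adjoint_def)
  also have "\<dots> = l2inner x (\<lambda>n. cnj c * T' y n + 0)"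
    using x y assms is_opD(1) by (subst l2inner_lincomb_right) (auto simp: l2inner_def)
  finally show "l2inner (op_scale c T x) y = l2inner x (op_scale (cnj c) T' y)" by (simp add: op_scale_def)
qed

lemma is_adjoint_mult:
  assumes "is_op S" "is_op T" "is_op S'" "is_op T'" "is_adjoint S S'" "is_adjoint T T'"
  shows "is_adjoint (op_mult S T) (op_mult T' S')"
  unfolding is_adjoint_def op_mult_def
  using assms is_opD(1) by (auto simp: is_adjoint_def)

lemma adjoint_pair_add: "adjoint_pair S S' \<Longrightarrow> adjoint_pair T T' \<Longrightarrow> adjoint_pair (op_add S T) (op_add S' T')"
  unfolding adjoint_pair_def by (auto intro: is_op_add is_adjoint_add)

lemma adjoint_pair_scale: "adjoint_pair T T' \<Longrightarrow> adjoint_pair (op_scale c T) (op_scale (cnj c) T')"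
  unfolding adjoint_pair_def using is_adjoint_scale[of T' T "cnj c"]
  by (auto intro: is_op_scale is_adjoint_scale)

lemma adjoint_pair_mult: "adjoint_pair S S' \<Longrightarrow> adjoint_pair T T' \<Longrightarrow> adjoint_pair (op_mult S T) (op_mult T' S')"
  unfolding adjoint_pair_def by (auto intro: is_op_mult is_adjoint_mult)

lemma adj_add: "adjoint_pair S S' \<Longrightarrow> adjoint_pair T T' \<Longrightarrow> adj (op_add S T) = op_add (adj S) (adj T)"
  by (simp add: adj_eq adjoint_pair_add)

lemma adj_scale: "adjoint_pair T T' \<Longrightarrow> adj (op_scale c T) = op_scale (cnj c) (adj T)"
  by (simp add: adj_eq adjoint_pair_scale)

lemma adj_mult: "adjoint_pair S S' \<Longrightarrow> adjoint_pair T T' \<Longrightarrow> adj (op_mult S T) = op_mult (adj T) (adj S)"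
  by (simp add: adj_eq adjoint_pair_mult)

lemma adj_adj: "adjoint_pair T T' \<Longrightarrow> adj (adj T) = T"
  by (simp add: adj_eq adjoint_pair_sym)

lemma adjoint_pair_diag: assumes "\<And>k. cmod (b k) \<le> B" shows "adjoint_pair (diag b) (diag (\<lambda>k. cnj (b k)))"
proof -
  have "is_op (diag (\<lambda>k. cnj (b k)))" using assms by (intro is_op_diag[of _ B]) simp
  moreover have "is_adjoint (diag b) (diag (\<lambda>k. cnj (b k)))" "is_adjoint (diag (\<lambda>k. cnj (b k))) (diag b)"
    by (auto simp: is_adjoint_def diag_def l2inner_def mult_ac)
  ultimately show ?thesis using is_op_diag[OF assms] by (simp add: adjoint_pair_def)
qed

lemma suminf_cnj: "summable f \<Longrightarrow> (\<Sum>n. cnj (f n)) = cnj (suminf f)"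
  by (metis sums_cnj summable_sums sums_unique)

lemma l2inner_cnj: "x \<in> l2 \<Longrightarrow> y \<in> l2 \<Longrightarrow> l2inner x y = cnj (l2inner y x)"
  unfolding l2inner_def using summable_l2inner[of y x]
  by (simp add: suminf_cnj[symmetric] mult.commute)

lemma l2inner_shiftU: assumes "x \<in> l2" "y \<in> l2"
  shows "l2inner (shiftU x) y = l2inner x (backshift y)"
proof -
  let ?f = "\<lambda>k. shiftU x k * cnj (y k)"
  have s: "summable ?f" using assms is_opD(1)[OF is_op_shiftU] summable_l2inner by blast
  have "l2inner (shiftU x) y = (\<Sum>k. ?f (Suc k))"
    using suminf_split_head[OF s] assms by (simp add: l2inner_def shiftU_def)
  also have "\<dots> = l2inner x (backshift y)" using assms by (simp add: l2inner_def shiftU_def backshift_def)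
  finally show ?thesis .
qed

lemma adjoint_pair_shift: "adjoint_pair shiftU backshift"
  unfolding adjoint_pair_def
proof (intro conjI)
  show "is_adjoint shiftU backshift" unfolding is_adjoint_def using l2inner_shiftU by blast
  have "l2inner (backshift x) y = l2inner x (shiftU y)" if "x \<in> l2" "y \<in> l2" for x y
  proof -
    have "l2inner (backshift x) y = cnj (l2inner y (backshift x))"
      by (rule l2inner_cnj) (use that is_opD(1)[OF is_op_backshift] in auto)
    also have "\<dots> = cnj (l2inner (shiftU y) x)" using l2inner_shiftU that by simp
    also have "\<dots> = l2inner x (shiftU y)"
      by (rule l2inner_cnj[symmetric]) (use that is_opD(1)[OF is_op_shiftU] in auto)
    finally show ?thesis .
  qed
  thus "is_adjoint backshift shiftU" unfolding is_adjoint_def by blast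
qed (auto simp: is_op_shiftU is_op_backshift)

lemma adj_shiftU: "adj shiftU = backshift"
  by (rule adj_eq[OF adjoint_pair_shift])

lemma adjoint_pair_backshift: "adjoint_pair backshift shiftU"
  by (rule adjoint_pair_sym[OF adjoint_pair_shift])

lemma adj_backshift: "adj backshift = shiftU"
  by (rule adj_eq[OF adjoint_pair_backshift])

section \<open>Banded operators\<close>

definition window :: "nat \<Rightarrow> nat \<Rightarrow> nat set" where "window R m = {m - R .. m + R}"

lemma window_iff: "n \<in> window R m \<longleftrightarrow> m \<le> n + R \<and> n \<le> m + R"
  by (auto simp: window_def)

lemma window_sym: "n \<in> window R m \<longleftrightarrow> m \<in> window R n"
  by (auto simp: window_iff)

lemma finite_window[simp]: "finite (window R m)" by (simp add: window_def)

lemma card_window: "card (window R m) \<le> 2 * R + 1"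
  by (simp add: window_def)

lemma window_mono: "R \<le> R' \<Longrightarrow> window R m \<subseteq> window R' m"
  by (auto simp: window_iff)

definition entry :: "op \<Rightarrow> nat \<Rightarrow> nat \<Rightarrow> complex" where "entry a m n = a (unit_vec n) m"

definition banded :: "nat \<Rightarrow> op \<Rightarrow> bool" where
  "banded R a \<longleftrightarrow> is_op a \<and> (\<forall>m n. n \<notin> window R m \<longrightarrow> entry a m n = 0)
     \<and> (\<forall>x\<in>l2. \<forall>m. a x m = (\<Sum>n\<in>window R m. entry a m n * x n)) \<and> (\<exists>M. \<forall>m n. cmod (entry a m n) \<le> M)"

lemma bandedD:
  assumes "banded R a"
  shows "is_op a" "\<And>m n. n \<notin> window R m \<Longrightarrow> entry a m n = 0"
    "\<And>x m. x \<in> l2 \<Longrightarrow> a x m = (\<Sum>n\<in>window R m. entry a m n * x n)"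
    "\<exists>M. \<forall>m n. cmod (entry a m n) \<le> M"
  using assms unfolding banded_def by blast+

lemma banded_apply_superset:
  assumes "banded R a" "x \<in> l2" "finite S" "window R m \<subseteq> S"
  shows "a x m = (\<Sum>n\<in>S. entry a m n * x n)"
proof -
  have "a x m = (\<Sum>n\<in>window R m. entry a m n * x n)" using bandedD(3)[OF assms(1,2)] .
  also have "\<dots> = (\<Sum>n\<in>S. entry a m n * x n)"
    using assms(3,4) bandedD(2)[OF assms(1)] by (intro sum.mono_neutral_left) auto
  finally show ?thesis .
qed

lemma banded_mono: assumes "banded R a" "R \<le> R'" shows "banded R' a"
  unfolding banded_def
proof (intro conjI allI impI ballI)
  show "is_op a" using bandedD(1)[OF assms(1)] .
  show "\<exists>M. \<forall>m n. cmod (entry a m n) \<le> M" using bandedD(4)[OF assms(1)] .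
  fix m n assume "n \<notin> window R' m"
  hence "n \<notin> window R m" using window_mono[OF assms(2)] by auto
  thus "entry a m n = 0" by (rule bandedD(2)[OF assms(1)])
next
  fix x m assume "x \<in> l2" thus "a x m = (\<Sum>n\<in>window R' m. entry a m n * x n)"
    by (intro banded_apply_superset[OF assms(1)] finite_window window_mono[OF assms(2)])
qed

lemma entry_add: "entry (op_add a b) m n = entry a m n + entry b m n"
  by (simp add: entry_def op_add_def)

lemma entry_scale: "entry (op_scale c a) m n = c * entry a m n"
  by (simp add: entry_def op_scale_def)

lemma banded_add: assumes "banded R a" "banded R b" shows "banded R (op_add a b)"
  unfolding banded_def
proof (intro conjI allI impI ballI)
  show "is_op (op_add a b)" using bandedD(1) assms is_op_add by blast
  obtain M1 where "\<forall>m n. cmod (entry a m n) \<le> M1" using bandedD(4)[OF assms(1)] by blast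
  moreover obtain M2 where "\<forall>m n. cmod (entry b m n) \<le> M2" using bandedD(4)[OF assms(2)] by blast
  ultimately have "\<forall>m n. cmod (entry (op_add a b) m n) \<le> M1 + M2"
    by (metis entry_add add_mono norm_triangle_le)
  thus "\<exists>M. \<forall>m n. cmod (entry (op_add a b) m n) \<le> M" by blast
  fix m n assume "n \<notin> window R m" thus "entry (op_add a b) m n = 0" using assms bandedD(2) by (simp add: entry_add)
next
  fix x m assume "x \<in> l2" thus "op_add a b x m = (\<Sum>n\<in>window R m. entry (op_add a b) m n * x n)"
    using assms bandedD(3) by (simp add: op_apply entry_add distrib_right sum.distrib)
qed

lemma banded_scale: assumes "banded R a" shows "banded R (op_scale c a)"
  unfolding banded_def
proof (intro conjI allI impI ballI)
  show "is_op (op_scale c a)" using bandedD(1) assms is_op_scale by blast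
  obtain M1 where "\<forall>m n. cmod (entry a m n) \<le> M1" using bandedD(4)[OF assms(1)] by blast
  hence "\<forall>m n. cmod (entry (op_scale c a) m n) \<le> cmod c * M1"
    by (simp add: entry_scale norm_mult mult_left_mono)
  thus "\<exists>M. \<forall>m n. cmod (entry (op_scale c a) m n) \<le> M" by blast
  fix m n assume "n \<notin> window R m" thus "entry (op_scale c a) m n = 0" using assms bandedD(2) by (simp add: entry_scale)
next
  fix x m assume "x \<in> l2" thus "op_scale c a x m = (\<Sum>n\<in>window R m. entry (op_scale c a) m n * x n)"
    using bandedD(3)[OF assms \<open>x \<in> l2\<close>, of m] by (simp add: op_apply entry_scale sum_distrib_left mult.assoc)
qed

lemma entry_shiftU: "entry shiftU m n = (if m = Suc n then 1 else 0)"
  unfolding entry_def shiftU_def using unit_vec_l2[of n] by simp (auto simp: unit_vec_def)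

lemma entry_backshift: "entry backshift m n = (if n = Suc m then 1 else 0)"
  unfolding entry_def backshift_def using unit_vec_l2[of n] by simp (auto simp: unit_vec_def)

lemma entry_diag: "entry (diag b) m n = (if n = m then b m else 0)"
  unfolding entry_def diag_def using unit_vec_l2[of n] by simp (auto simp: unit_vec_def)

lemma banded_shiftU: "banded 1 shiftU"
  unfolding banded_def
proof (intro conjI allI impI ballI)
  show "is_op shiftU" by (rule is_op_shiftU)
  show "\<exists>M. \<forall>m n. cmod (entry shiftU m n) \<le> M" by (intro exI[of _ 1]) (simp add: entry_shiftU)
  fix m n assume "n \<notin> window 1 m" thus "entry shiftU m n = 0" by (auto simp: entry_shiftU window_iff)
next
  fix x m assume x: "x \<in> l2"
  show "shiftU x m = (\<Sum>n\<in>window 1 m. entry shiftU m n * x n)"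
  proof (cases m)
    case 0
    have "(\<Sum>n\<in>window 1 m. entry shiftU m n * x n) = 0" using 0 by (simp add: entry_shiftU)
    thus ?thesis using x 0 by (simp add: shiftU_def)
  next
    case (Suc k)
    have "(\<Sum>n\<in>window 1 m. entry shiftU m n * x n) = (\<Sum>n\<in>window 1 m. if n = k then x n else 0)"
      by (intro sum.cong) (auto simp: entry_shiftU Suc)
    also have "\<dots> = x k" by (simp add: window_iff Suc)
    finally show ?thesis using x Suc by (simp add: shiftU_def)
  qed
qed

lemma banded_backshift: "banded 1 backshift"
  unfolding banded_def
proof (intro conjI allI impI ballI)
  show "is_op backshift" by (rule is_op_backshift)
  show "\<exists>M. \<forall>m n. cmod (entry backshift m n) \<le> M" by (intro exI[of _ 1]) (simp add: entry_backshift)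
  fix m n assume "n \<notin> window 1 m" thus "entry backshift m n = 0" by (auto simp: entry_backshift window_iff)
next
  fix x m assume x: "x \<in> l2"
  have "(\<Sum>n\<in>window 1 m. entry backshift m n * x n) = (\<Sum>n\<in>window 1 m. if n = Suc m then x n else 0)"
    by (intro sum.cong) (auto simp: entry_backshift)
  also have "\<dots> = x (Suc m)" by (simp add: window_iff)
  finally show "backshift x m = (\<Sum>n\<in>window 1 m. entry backshift m n * x n)" using x by (simp add: backshift_def)
qed

lemma banded_diag: assumes "\<And>k. cmod (b k) \<le> B" shows "banded 0 (diag b)"
  unfolding banded_def
proof (intro conjI allI impI ballI)
  show "is_op (diag b)" by (rule is_op_diag[OF assms])
  have "cmod (entry (diag b) m n) \<le> B" for m n
  proof -
    have B0: "0 \<le> B" using assms[of 0] norm_ge_zero[of "b 0"] by linarith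
    thus ?thesis using assms[of m] by (auto simp: entry_diag)
  qed
  thus "\<exists>M. \<forall>m n. cmod (entry (diag b) m n) \<le> M" by blast
  fix m n assume "n \<notin> window 0 m" thus "entry (diag b) m n = 0" by (auto simp: entry_diag window_iff)
next
  fix x m assume x: "x \<in> l2"
  show "diag b x m = (\<Sum>n\<in>window 0 m. entry (diag b) m n * x n)"
    using x by (simp add: window_def entry_diag) (simp add: diag_def)
qed

lemma entry_mult: assumes "banded R1 a" "is_op b"
  shows "entry (op_mult a b) m n = (\<Sum>k\<in>window R1 m. entry a m k * entry b k n)"
  using bandedD(3)[OF assms(1) is_opD(1)[OF assms(2) unit_vec_l2]] by (simp add: entry_def op_mult_def)

lemma entry_mult_bound:
  assumes a: "banded R a" and b: "is_op b"
    and M1: "\<And>m n. cmod (entry a m n) \<le> M1" and M2: "\<And>m n. cmod (entry b m n) \<le> M2"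
  shows "cmod (entry (op_mult a b) m n) \<le> (2 * real R + 1) * (M1 * M2)"
proof -
  have "0 \<le> M1" "0 \<le> M2" using M1[of 0 0] M2[of 0 0] norm_ge_zero order_trans by metis+
  have "cmod (entry (op_mult a b) m n) \<le> (\<Sum>k\<in>window R m. cmod (entry a m k) * cmod (entry b k n))"
    unfolding entry_mult[OF a b] norm_mult[symmetric] by (rule norm_sum)
  also have "\<dots> \<le> (\<Sum>k\<in>window R m. M1 * M2)"
    using M1 M2 \<open>0 \<le> M1\<close> by (intro sum_mono mult_mono) auto
  also have "\<dots> = card (window R m) * (M1 * M2)" by simp
  also have "\<dots> \<le> (2 * real R + 1) * (M1 * M2)"
    using card_window[of R m] \<open>0 \<le> M1\<close> \<open>0 \<le> M2\<close> by (intro mult_right_mono) simp_all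
  finally show ?thesis by simp
qed

lemma banded_mult: assumes a: "banded R1 a" and b: "banded R2 b" shows "banded (R1 + R2) (op_mult a b)"
  unfolding banded_def
proof (intro conjI allI impI ballI)
  have opa: "is_op a" and opb: "is_op b" using a b bandedD(1) by auto
  show "is_op (op_mult a b)" using opa opb is_op_mult by blast
  obtain M1 where M1: "\<forall>m n. cmod (entry a m n) \<le> M1" using bandedD(4)[OF a] by blast
  obtain M2 where M2: "\<forall>m n. cmod (entry b m n) \<le> M2" using bandedD(4)[OF b] by blast
  have "cmod (entry (op_mult a b) m n) \<le> (2 * real R1 + 1) * (M1 * M2)" for m n
    using M1 M2 by (intro entry_mult_bound[OF a opb]) auto
  thus "\<exists>M. \<forall>m n. cmod (entry (op_mult a b) m n) \<le> M" by blast
  fix m n assume n: "n \<notin> window (R1 + R2) m"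
  have "entry b k n = 0" if "k \<in> window R1 m" for k
    using that n bandedD(2)[OF b, of n k] by (auto simp: window_iff)
  thus "entry (op_mult a b) m n = 0" unfolding entry_mult[OF a opb] by simp
next
  have opb: "is_op b" using b bandedD(1) by auto
  fix x m assume x: "x \<in> l2"
  have "op_mult a b x m = (\<Sum>k\<in>window R1 m. entry a m k * b x k)"
    using bandedD(3)[OF a is_opD(1)[OF opb x]] by (simp add: op_mult_def)
  also have "\<dots> = (\<Sum>k\<in>window R1 m. entry a m k * (\<Sum>n\<in>window (R1+R2) m. entry b k n * x n))"
  proof (intro sum.cong refl)
    fix k assume "k \<in> window R1 m"
    hence "window R2 k \<subseteq> window (R1 + R2) m" by (auto simp: window_iff)
    thus "entry a m k * b x k = entry a m k * (\<Sum>n\<in>window (R1+R2) m. entry b k n * x n)"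
      using banded_apply_superset[OF b x] by simp
  qed
  also have "\<dots> = (\<Sum>n\<in>window (R1+R2) m. (\<Sum>k\<in>window R1 m. entry a m k * entry b k n) * x n)"
    by (simp add: sum_distrib_left sum_distrib_right mult.assoc) (rule sum.swap)
  also have "\<dots> = (\<Sum>n\<in>window (R1+R2) m. entry (op_mult a b) m n * x n)"
    by (simp add: entry_mult[OF a opb])
  finally show "op_mult a b x m = (\<Sum>n\<in>window (R1 + R2) m. entry (op_mult a b) m n * x n)" .
qed

lemma sum_window_le:
  fixes g :: "nat \<Rightarrow> real"
  assumes g: "\<And>n. 0 \<le> g n" "summable g"
  shows "(\<Sum>m<N. \<Sum>n\<in>window R m. g n) \<le> (2 * real R + 1) * suminf g"
proof -
  have "(\<Sum>m<N. \<Sum>n\<in>window R m. g n) = (\<Sum>m<N. \<Sum>n<N+R+1. if n \<in> window R m then g n else 0)"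
  proof (rule sum.cong[OF refl])
    fix m assume m: "m \<in> {..<N}"
    have sub: "window R m \<subseteq> {..<N+R+1}" using m by (auto simp: window_iff)
    have "(\<Sum>n<N+R+1. if n \<in> window R m then g n else 0) = sum g ({..<N+R+1} \<inter> window R m)"
      by (simp add: sum.inter_restrict)
    also have "{..<N+R+1} \<inter> window R m = window R m" using sub by blast
    finally show "(\<Sum>n\<in>window R m. g n) = (\<Sum>n<N+R+1. if n \<in> window R m then g n else 0)" by simp
  qed
  also have "\<dots> = (\<Sum>n<N+R+1. \<Sum>m<N. if n \<in> window R m then g n else 0)"
    by (rule sum.swap)
  also have "\<dots> \<le> (\<Sum>n<N+R+1. (2 * R + 1) * g n)"
  proof (rule sum_mono)
    fix n
    have "(\<Sum>m<N. if n \<in> window R m then g n else 0) = (\<Sum>m<N. if m \<in> window R n then g n else 0)"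
      by (simp add: window_sym)
    also have "\<dots> = sum (\<lambda>m. g n) ({..<N} \<inter> window R n)"
      by (rule sum.inter_restrict[symmetric]) simp
    also have "\<dots> = card ({..<N} \<inter> window R n) * g n" by simp
    also have "\<dots> \<le> (2 * R + 1) * g n"
    proof (rule mult_right_mono)
      have "card ({..<N} \<inter> window R n) \<le> card (window R n)" by (intro card_mono) auto
      also have "\<dots> \<le> 2 * R + 1" by (rule card_window)
      finally show "real (card ({..<N} \<inter> window R n)) \<le> real (2 * R + 1)" by (simp only: of_nat_le_iff)
    qed (rule g(1))
    finally show "(\<Sum>m<N. if n \<in> window R m then g n else 0) \<le> (2 * R + 1) * g n" by simp
  qed
  also have "\<dots> = (2 * R + 1) * (\<Sum>n<N+R+1. g n)" by (rule sum_distrib_left[symmetric])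
  also have "\<dots> \<le> (2 * R + 1) * suminf g"
    by (intro mult_left_mono sum_le_suminf g) auto
  finally show ?thesis by (simp add: algebra_simps)
qed

lemma norm_window_sum_sq_le:
  assumes "\<And>n. n \<in> window R m \<Longrightarrow> cmod (t n) \<le> \<delta>"
  shows "(cmod (\<Sum>n\<in>window R m. t n * x n))\<^sup>2
    \<le> (2 * real R + 1) * \<delta>\<^sup>2 * (\<Sum>n\<in>window R m. (cmod (x n))\<^sup>2)"
proof -
  have "cmod (\<Sum>n\<in>window R m. t n * x n) \<le> (\<Sum>n\<in>window R m. cmod (t n * x n))"
    by (rule norm_sum)
  also have "\<dots> \<le> (\<Sum>n\<in>window R m. \<delta> * cmod (x n))"
    using assms by (intro sum_mono) (simp add: norm_mult mult_right_mono)
  finally have "(cmod (\<Sum>n\<in>window R m. t n * x n))\<^sup>2 \<le> (\<Sum>n\<in>window R m. \<delta> * cmod (x n))\<^sup>2"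
    by (intro power_mono) auto
  also have "\<dots> \<le> (\<Sum>n\<in>window R m. (\<delta> * cmod (x n))\<^sup>2) * card (window R m)"
    by (rule sum_squared_le_sum_of_squares)
  also have "\<dots> \<le> (\<Sum>n\<in>window R m. (\<delta> * cmod (x n))\<^sup>2) * (2 * real R + 1)"
    using card_window[of R m] by (intro mult_left_mono) (auto intro: sum_nonneg)
  also have "\<dots> = (2 * real R + 1) * \<delta>\<^sup>2 * (\<Sum>n\<in>window R m. (cmod (x n))\<^sup>2)"
    by (simp add: power_mult_distrib sum_distrib_left mult_ac)
  finally show ?thesis .
qed

lemma banded_l2_bound:
  assumes T: "\<And>m. T x m = (\<Sum>n\<in>window R m. t m n * x n)"
    and del: "\<And>m n. n \<in> window R m \<Longrightarrow> cmod (t m n) \<le> \<delta>"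
    and x: "x \<in> l2"
  shows "T x \<in> l2" "l2norm (T x) \<le> ((2 * real R + 1) * \<delta>) * l2norm x"
proof -
  define g where "g = (\<lambda>n. (cmod (x n))\<^sup>2)"
  have g0: "\<And>n. 0 \<le> g n" and gs: "summable g" using x by (auto simp: g_def l2_iff)
  have d0: "0 \<le> \<delta>" using del[of 0 0] norm_ge_zero[of "t 0 0"] by (simp add: window_iff del: norm_ge_zero)
  have pw: "(cmod (T x m))\<^sup>2 \<le> (2 * real R + 1) * \<delta>\<^sup>2 * (\<Sum>n\<in>window R m. g n)" for m
    unfolding T g_def by (rule norm_window_sum_sq_le) (rule del)
  define K where "K = (2 * real R + 1) * \<delta>"
  have K0: "K \<ge> 0" using d0 by (simp add: K_def)
  have ps: "(\<Sum>m<N. (cmod (T x m))\<^sup>2) \<le> K\<^sup>2 * suminf g" for N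
  proof -
    have "(\<Sum>m<N. (cmod (T x m))\<^sup>2) \<le> (\<Sum>m<N. (2 * real R + 1) * \<delta>\<^sup>2 * (\<Sum>n\<in>window R m. g n))"
      by (intro sum_mono pw)
    also have "\<dots> = (2 * real R + 1) * \<delta>\<^sup>2 * (\<Sum>m<N. \<Sum>n\<in>window R m. g n)" by (simp add: sum_distrib_left)
    also have "\<dots> \<le> (2 * real R + 1) * \<delta>\<^sup>2 * ((2 * real R + 1) * suminf g)"
      using sum_window_le[OF g0 gs, of R N] by (intro mult_left_mono) (simp_all add: algebra_simps)
    also have "\<dots> = K\<^sup>2 * suminf g" by (simp add: K_def power2_eq_square algebra_simps)
    finally show ?thesis .
  qed
  have sm: "summable (\<lambda>m. (cmod (T x m))\<^sup>2)"
  proof (rule bounded_imp_summable)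
    fix N show "(\<Sum>m\<le>N. (cmod (T x m))\<^sup>2) \<le> K\<^sup>2 * suminf g"
      using ps[of "Suc N"] by (simp add: lessThan_Suc_atMost)
  qed simp
  thus "T x \<in> l2" by (simp add: l2_iff)
  have "(\<Sum>m. (cmod (T x m))\<^sup>2) \<le> K\<^sup>2 * (\<Sum>n. (cmod (x n))\<^sup>2)"
    using suminf_le_const[OF sm ps] by (simp add: g_def)
  thus "l2norm (T x) \<le> ((2 * real R + 1) * \<delta>) * l2norm x"
    using l2norm_le[OF _ K0] by (simp add: K_def)
qed

lemma opnorm_le:
  assumes "C \<ge> 0" "\<And>x. x \<in> l2 \<Longrightarrow> l2norm (T x) \<le> C * l2norm x"
  shows "opnorm T \<le> C"
  unfolding opnorm_def
proof (rule cSup_least)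
  show "{l2norm (T x) |x. x \<in> l2 \<and> l2norm x \<le> 1} \<noteq> {}" using zero_l2 by fastforce
  fix v assume "v \<in> {l2norm (T x) |x. x \<in> l2 \<and> l2norm x \<le> 1}"
  then obtain x where x: "x \<in> l2" "l2norm x \<le> 1" "v = l2norm (T x)" by blast
  have "v \<le> C * l2norm x" using assms(2) x by simp
  also have "\<dots> \<le> C * 1" using x assms(1) by (intro mult_left_mono) auto
  finally show "v \<le> C" by simp
qed

lemma opnorm_nonneg:
  assumes "\<And>x. x \<in> l2 \<Longrightarrow> T x \<in> l2" "\<And>x. x \<in> l2 \<Longrightarrow> l2norm (T x) \<le> C * l2norm x"
  shows "0 \<le> opnorm T"
  unfolding opnorm_def
proof -
  have "0 \<le> l2norm (T (\<lambda>n. 0))" using assms(1)[OF zero_l2] by (rule l2norm_nonneg)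
  also have "\<dots> \<le> Sup {l2norm (T x) |x. x \<in> l2 \<and> l2norm x \<le> 1}"
  proof (rule cSup_upper)
    show "l2norm (T (\<lambda>n. 0)) \<in> {l2norm (T x) |x. x \<in> l2 \<and> l2norm x \<le> 1}" by fastforce
    have "\<forall>v\<in>{l2norm (T x) |x. x \<in> l2 \<and> l2norm x \<le> 1}. v \<le> max C 0"
    proof
      fix v assume "v \<in> {l2norm (T x) |x. x \<in> l2 \<and> l2norm x \<le> 1}"
      then obtain x where x: "x \<in> l2" "l2norm x \<le> 1" "v = l2norm (T x)" by blast
      have "v \<le> C * l2norm x" using assms(2) x by simp
      also have "\<dots> \<le> max C 0 * l2norm x" using l2norm_nonneg[OF x(1)] by (intro mult_right_mono) auto
      also have "\<dots> \<le> max C 0 * 1" using x by (intro mult_left_mono) auto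
      finally show "v \<le> max C 0" by simp
    qed
    thus "bdd_above {l2norm (T x) |x. x \<in> l2 \<and> l2norm x \<le> 1}" by (intro bdd_aboveI[where M="max C 0"]) simp
  qed
  finally show "0 \<le> Sup {l2norm (T x) |x. x \<in> l2 \<and> l2norm x \<le> 1}" .
qed

lemma opnorm_banded_le:
  assumes T: "\<And>x m. x \<in> l2 \<Longrightarrow> T x m = (\<Sum>n\<in>window R m. t m n * x n)"
    and del: "\<And>m n. n \<in> window R m \<Longrightarrow> cmod (t m n) \<le> \<delta>"
  shows "opnorm T \<le> (2 * real R + 1) * \<delta>" "0 \<le> opnorm T"
proof -
  have d0: "0 \<le> \<delta>" using del[of 0 0] norm_ge_zero[of "t 0 0"] by (simp add: window_iff del: norm_ge_zero)
  have b: "T x \<in> l2 \<and> l2norm (T x) \<le> ((2 * real R + 1) * \<delta>) * l2norm x" if x: "x \<in> l2" for x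
    using banded_l2_bound[where T=T and x=x and R=R and t=t and \<delta>=\<delta>, OF T[OF x] del x] by blast
  show "opnorm T \<le> (2 * real R + 1) * \<delta>" using b d0 by (intro opnorm_le) auto
  show "0 \<le> opnorm T" using b by (intro opnorm_nonneg) auto
qed

section \<open>The derivation d_alpha\<close>

definition psum :: "(nat \<Rightarrow> complex) \<Rightarrow> nat \<Rightarrow> complex" where "psum \<gamma> k = (\<Sum>i<k. \<gamma> i)"
definition psum_diff :: "(nat \<Rightarrow> complex) \<Rightarrow> nat \<Rightarrow> nat \<Rightarrow> complex" where "psum_diff \<gamma> m n = psum \<gamma> m - psum \<gamma> n"

text \<open>The sum runs over the support of row m, which is finite for banded a; for other
  operators the infinite sum yields the junk value 0.\<close>

definition dalpha :: "(nat \<Rightarrow> complex) \<Rightarrow> op \<Rightarrow> op" where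
  "dalpha \<alpha> a = (\<lambda>x. if x \<in> l2 then (\<lambda>m. \<Sum>n\<in>{n. entry a m n \<noteq> 0}. psum_diff \<alpha> m n * entry a m n * x n) else (\<lambda>n. 0))"

lemma psum_sub_eq_sum: "n \<le> m \<Longrightarrow> psum \<gamma> m - psum \<gamma> n = (\<Sum>i\<in>{n..<m}. \<gamma> i)"
  unfolding psum_def using sum_diff_nat_ivl[of 0 n m \<gamma>] by (simp add: lessThan_atLeast0)

lemma psum_diff_bound:
  assumes "\<And>i. cmod (\<gamma> i) \<le> B" "n \<in> window R m"
  shows "cmod (psum_diff \<gamma> m n) \<le> R * B"
proof -
  have B: "0 \<le> B" using assms(1)[of 0] norm_ge_zero[of "\<gamma> 0"] by linarith
  have gen: "cmod (psum \<gamma> q - psum \<gamma> p) \<le> R * B" if "p \<le> q" "q \<le> p + R" for p q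
  proof -
    have "cmod (psum \<gamma> q - psum \<gamma> p) \<le> (\<Sum>i\<in>{p..<q}. cmod (\<gamma> i))"
      unfolding psum_sub_eq_sum[OF that(1)] by (rule norm_sum)
    also have "\<dots> \<le> (\<Sum>i\<in>{p..<q}. B)" using assms(1) by (intro sum_mono) auto
    also have "\<dots> = real (q - p) * B" by simp
    also have "\<dots> \<le> real R * B" using that B by (intro mult_right_mono) auto
    finally show ?thesis .
  qed
  show ?thesis
  proof (cases "n \<le> m")
    case True thus ?thesis using gen[of n m] assms(2) by (simp add: psum_diff_def window_iff)
  next
    case False
    hence "cmod (psum \<gamma> n - psum \<gamma> m) \<le> R * B" using gen[of m n] assms(2) by (simp add: window_iff)
    thus ?thesis by (simp add: psum_diff_def norm_minus_commute)
  qed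
qed

lemma psum_diff_self[simp]: "psum_diff \<gamma> m m = 0"
  by (simp add: psum_diff_def)

lemma dalpha_apply_superset:
  assumes "banded R a" "x \<in> l2" "finite S" "window R m \<subseteq> S"
  shows "dalpha \<alpha> a x m = (\<Sum>n\<in>S. psum_diff \<alpha> m n * entry a m n * x n)"
proof -
  have sub: "{n. entry a m n \<noteq> 0} \<subseteq> S" using bandedD(2)[OF assms(1)] assms(4) by blast
  have "dalpha \<alpha> a x m = (\<Sum>n\<in>{n. entry a m n \<noteq> 0}. psum_diff \<alpha> m n * entry a m n * x n)"
    using assms(2) by (simp add: dalpha_def)
  also have "\<dots> = (\<Sum>n\<in>S. psum_diff \<alpha> m n * entry a m n * x n)"
    using sub assms(3) by (intro sum.mono_neutral_left) auto
  finally show ?thesis .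
qed

lemma dalpha_apply:
  assumes "banded R a" "x \<in> l2"
  shows "dalpha \<alpha> a x m = (\<Sum>n\<in>window R m. psum_diff \<alpha> m n * entry a m n * x n)"
  by (rule dalpha_apply_superset[OF assms finite_window subset_refl])

lemma dalpha_out: "x \<notin> l2 \<Longrightarrow> dalpha \<alpha> a x = (\<lambda>n. 0)"
  by (simp add: dalpha_def)

lemma dalpha_zero: "dalpha \<alpha> a (\<lambda>n. 0) = (\<lambda>n. 0)"
  by (simp add: dalpha_def)

lemma is_op_dalpha:
  assumes a: "banded R a" and al: "\<And>i. cmod (\<alpha> i) \<le> B"
  shows "is_op (dalpha \<alpha> a)"
proof -
  obtain M where M: "\<And>m n. cmod (entry a m n) \<le> M" using bandedD(4)[OF a] by blast
  have B: "0 \<le> B" using al[of 0] norm_ge_zero[of "\<alpha> 0"] by linarith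
  have tb: "cmod (psum_diff \<alpha> m n * entry a m n) \<le> R * B * M" if "n \<in> window R m" for m n
  proof -
    have "cmod (psum_diff \<alpha> m n) * cmod (entry a m n) \<le> (R * B) * M"
      using psum_diff_bound[OF al that] M B by (intro mult_mono) auto
    thus ?thesis by (simp add: norm_mult)
  qed
  have rep: "\<And>m. dalpha \<alpha> a x m = (\<Sum>n\<in>window R m. (psum_diff \<alpha> m n * entry a m n) * x n)" if "x \<in> l2" for x
    using dalpha_apply[OF a that] by simp
  have bn: "dalpha \<alpha> a x \<in> l2 \<and> l2norm (dalpha \<alpha> a x) \<le> ((2 * real R + 1) * (R * B * M)) * l2norm x"
    if x: "x \<in> l2" for x
    using banded_l2_bound[where T="dalpha \<alpha> a" and x=x and R=R and t="\<lambda>m n. psum_diff \<alpha> m n * entry a m n" and \<delta>="R * B * M", OF rep[OF x] tb x] by blast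
  show ?thesis unfolding is_op_def
  proof (intro conjI ballI allI impI)
    fix x assume "x \<in> l2" thus "dalpha \<alpha> a x \<in> l2" using bn by blast
  next
    fix x y c assume x: "x \<in> l2" and y: "y \<in> l2"
    show "dalpha \<alpha> a (\<lambda>n. c * x n + y n) = (\<lambda>n. c * dalpha \<alpha> a x n + dalpha \<alpha> a y n)"
    proof (rule ext)
      fix m
      have l: "(\<lambda>n. c * x n + y n) \<in> l2" using x y by simp
      show "dalpha \<alpha> a (\<lambda>n. c * x n + y n) m = c * dalpha \<alpha> a x m + dalpha \<alpha> a y m"
        unfolding dalpha_apply[OF a l] dalpha_apply[OF a x] dalpha_apply[OF a y]
        by (simp add: sum_distrib_left sum.distrib[symmetric] algebra_simps)
    qed
  next
    show "\<exists>C. \<forall>x\<in>l2. l2norm (dalpha \<alpha> a x) \<le> C * l2norm x" using bn by blast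
  next
    fix x assume "x \<notin> l2" thus "dalpha \<alpha> a x = (\<lambda>n. 0)" by (rule dalpha_out)
  qed
qed

lemma dalpha_add:
  assumes "banded R a" "banded R b"
  shows "dalpha \<alpha> (op_add a b) = op_add (dalpha \<alpha> a) (dalpha \<alpha> b)"
proof (rule ext, rule ext)
  fix x m
  show "dalpha \<alpha> (op_add a b) x m = op_add (dalpha \<alpha> a) (dalpha \<alpha> b) x m"
  proof (cases "x \<in> l2")
    case True
    show ?thesis using True
      by (simp add: op_apply dalpha_apply[OF banded_add[OF assms]] dalpha_apply[OF assms(1)] dalpha_apply[OF assms(2)]
          entry_add sum.distrib algebra_simps)
  qed (simp add: op_apply dalpha_out)
qed

lemma dalpha_scale:
  assumes "banded R a"
  shows "dalpha \<alpha> (op_scale c a) = op_scale c (dalpha \<alpha> a)"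
proof (rule ext, rule ext)
  fix x m
  show "dalpha \<alpha> (op_scale c a) x m = op_scale c (dalpha \<alpha> a) x m"
  proof (cases "x \<in> l2")
    case True
    show ?thesis using True
      by (simp add: op_apply dalpha_apply[OF banded_scale[OF assms]] dalpha_apply[OF assms(1)]
          entry_scale sum_distrib_left algebra_simps)
  qed (simp add: op_apply dalpha_out)
qed

lemma dalpha_mult:
  assumes a: "banded R1 a" and b: "banded R2 b" and al: "\<And>i. cmod (\<alpha> i) \<le> B"
  shows "dalpha \<alpha> (op_mult a b) = op_add (op_mult (dalpha \<alpha> a) b) (op_mult a (dalpha \<alpha> b))"
proof (rule ext, rule ext)
  fix x m
  have opa: "is_op a" and opb: "is_op b" using a b bandedD(1) by auto
  have opdb: "is_op (dalpha \<alpha> b)" by (rule is_op_dalpha[OF b al])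
  show "dalpha \<alpha> (op_mult a b) x m = op_add (op_mult (dalpha \<alpha> a) b) (op_mult a (dalpha \<alpha> b)) x m"
  proof (cases "x \<in> l2")
    case x: True
    let ?S = "window (R1 + R2) m"
    have bx: "b x \<in> l2" and dbx: "dalpha \<alpha> b x \<in> l2" using is_opD(1) opb opdb x by auto
    have inner1: "b x k = (\<Sum>n\<in>?S. entry b k n * x n)" if "k \<in> window R1 m" for k
      using that by (intro banded_apply_superset[OF b x]) (auto simp: window_iff)
    have inner2: "dalpha \<alpha> b x k = (\<Sum>n\<in>?S. psum_diff \<alpha> k n * entry b k n * x n)" if "k \<in> window R1 m" for k
      using that by (intro dalpha_apply_superset[OF b x]) (auto simp: window_iff)
    have L: "dalpha \<alpha> (op_mult a b) x m = (\<Sum>n\<in>?S. \<Sum>k\<in>window R1 m. psum_diff \<alpha> m n * entry a m k * entry b k n * x n)"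
      using dalpha_apply[OF banded_mult[OF a b] x, of \<alpha> m]
      by (simp add: entry_mult[OF a opb] sum_distrib_left sum_distrib_right mult_ac)
    have R1: "dalpha \<alpha> a (b x) m = (\<Sum>k\<in>window R1 m. \<Sum>n\<in>?S. psum_diff \<alpha> m k * entry a m k * entry b k n * x n)"
      using dalpha_apply[OF a bx, of \<alpha> m] inner1
      by (simp add: sum_distrib_left mult_ac)
    have R2: "a (dalpha \<alpha> b x) m = (\<Sum>k\<in>window R1 m. \<Sum>n\<in>?S. psum_diff \<alpha> k n * entry a m k * entry b k n * x n)"
      using bandedD(3)[OF a dbx, of m] inner2
      by (simp add: sum_distrib_left mult_ac)
    have "dalpha \<alpha> (op_mult a b) x m = (\<Sum>k\<in>window R1 m. \<Sum>n\<in>?S. psum_diff \<alpha> m n * entry a m k * entry b k n * x n)"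
      unfolding L by (rule sum.swap)
    also have "\<dots> = (\<Sum>k\<in>window R1 m. \<Sum>n\<in>?S. psum_diff \<alpha> m k * entry a m k * entry b k n * x n
                      + psum_diff \<alpha> k n * entry a m k * entry b k n * x n)"
      by (intro sum.cong refl) (simp add: psum_diff_def algebra_simps)
    also have "\<dots> = dalpha \<alpha> a (b x) m + a (dalpha \<alpha> b x) m"
      unfolding R1 R2 by (simp add: sum.distrib)
    finally show ?thesis by (simp add: op_apply)
  next
    case False
    have "b x = (\<lambda>n. 0)" "dalpha \<alpha> b x = (\<lambda>n. 0)" using False opb is_opD(3) dalpha_out by auto
    moreover have "a (\<lambda>n. 0) = (\<lambda>n. 0)" by (rule is_op_zero[OF opa])
    ultimately show ?thesis using False by (simp add: op_apply dalpha_out dalpha_zero)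
  qed
qed

lemma star_alg_banded_adjoint:
  assumes gen: "\<And>g. g \<in> X \<Longrightarrow>
      (\<exists>R. banded R g) \<and> (\<exists>g'\<in>star_alg X. adjoint_pair g g' \<and> (\<exists>R. banded R g'))"
    and T: "T \<in> star_alg X"
  shows "(\<exists>R. banded R T) \<and> (\<exists>T'\<in>star_alg X. adjoint_pair T T' \<and> (\<exists>R. banded R T'))"
  using T
proof (induction rule: star_alg.induct)
  case (gen T)
  then show ?case by (rule assms(1))
next
  case (add S T)
  obtain R1 R2 where "banded R1 S" "banded R2 T" using add.IH by blast
  then have "banded (max R1 R2) (op_add S T)"
    by (intro banded_add) (auto elim: banded_mono)
  moreover obtain S' T' R1' R2' where
    S': "S' \<in> star_alg X" "adjoint_pair S S'" "banded R1' S'" and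
    T': "T' \<in> star_alg X" "adjoint_pair T T'" "banded R2' T'"
    using add.IH by blast
  then have "banded (max R1' R2') (op_add S' T')"
    by (intro banded_add) (auto elim: banded_mono)
  moreover have "op_add S' T' \<in> star_alg X" using S'(1) T'(1) by (rule star_alg.add)
  moreover have "adjoint_pair (op_add S T) (op_add S' T')" using S'(2) T'(2) by (rule adjoint_pair_add)
  ultimately show ?case by blast
next
  case (scale T c)
  obtain R T' R' where "banded R T" "T' \<in> star_alg X" "adjoint_pair T T'" "banded R' T'"
    using scale.IH by blast
  then have "banded R (op_scale c T)" "op_scale (cnj c) T' \<in> star_alg X"
    "adjoint_pair (op_scale c T) (op_scale (cnj c) T')" "banded R' (op_scale (cnj c) T')"
    by (auto intro: banded_scale adjoint_pair_scale star_alg.scale)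
  then show ?case by blast
next
  case (mult S T)
  obtain R1 R2 where "banded R1 S" "banded R2 T" using mult.IH by blast
  then have "banded (R1 + R2) (op_mult S T)" by (rule banded_mult)
  moreover obtain S' T' R1' R2' where
    S': "S' \<in> star_alg X" "adjoint_pair S S'" "banded R1' S'" and
    T': "T' \<in> star_alg X" "adjoint_pair T T'" "banded R2' T'"
    using mult.IH by blast
  then have "banded (R2' + R1') (op_mult T' S')" by (intro banded_mult)
  moreover have "op_mult T' S' \<in> star_alg X" using T'(1) S'(1) by (rule star_alg.mult)
  moreover have "adjoint_pair (op_mult S T) (op_mult T' S')" using S'(2) T'(2) by (rule adjoint_pair_mult)
  ultimately show ?case by blast
next
  case (star T)
  then obtain R T' R' where "banded R T" "T' \<in> star_alg X" "adjoint_pair T T'" "banded R' T'"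
    by blast
  moreover from this have "adj T = T'" by (simp add: adj_eq)
  ultimately show ?case using star.hyps adjoint_pair_sym by auto
qed

lemma star_alg_subset:
  assumes "T \<in> star_alg X" "\<And>g. g \<in> X \<Longrightarrow> g \<in> star_alg Y"
  shows "T \<in> star_alg Y"
  using assms(1)
proof (induction rule: star_alg.induct)
  case (gen T) thus ?case by (rule assms(2))
qed (auto intro: star_alg.intros)

lemma is_derivationD:
  assumes "is_derivation D B d"
  shows "\<And>a b. a \<in> D \<Longrightarrow> b \<in> D \<Longrightarrow> d (op_add a b) = op_add (d a) (d b)"
    "\<And>a c. a \<in> D \<Longrightarrow> d (op_scale c a) = op_scale c (d a)"
    "\<And>a b. a \<in> D \<Longrightarrow> b \<in> D \<Longrightarrow> d (op_mult a b) = op_add (op_mult (d a) b) (op_mult a (d b))"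
  using assms unfolding is_derivation_def by blast+

text \<open>The induction carries T and adj T together: the adjoint of a sum or product is expressed
  through the adjoints of its parts, and adj (adj T) = T.\<close>

lemma derivations_eq_on_star_alg:
  assumes d: "is_derivation (star_alg X) B d" and d': "is_derivation (star_alg X) B d'"
    and adjoints: "\<And>T. T \<in> star_alg X \<Longrightarrow> \<exists>T'. adjoint_pair T T'"
    and gen: "\<And>g. g \<in> X \<Longrightarrow> d' g = d g \<and> d' (adj g) = d (adj g)"
    and T: "T \<in> star_alg X"
  shows "d' T = d T \<and> d' (adj T) = d (adj T)"
  using T
proof (induction rule: star_alg.induct)
  case (gen T)
  then show ?case by (rule assms(4))
next
  case (add S T)
  obtain S' T' where "adjoint_pair S S'" "adjoint_pair T T'" using adjoints add.hyps by blast
  then have "adj (op_add S T) = op_add (adj S) (adj T)" by (rule adj_add)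
  with add.IH add.hyps show ?case
    by (simp add: is_derivationD(1)[OF d] is_derivationD(1)[OF d'] star_alg.star)
next
  case (scale T c)
  obtain T' where "adjoint_pair T T'" using adjoints scale.hyps by blast
  then have "adj (op_scale c T) = op_scale (cnj c) (adj T)" by (rule adj_scale)
  with scale.IH scale.hyps show ?case
    by (simp add: is_derivationD(2)[OF d] is_derivationD(2)[OF d'] star_alg.star)
next
  case (mult S T)
  obtain S' T' where "adjoint_pair S S'" "adjoint_pair T T'" using adjoints mult.hyps by blast
  then have "adj (op_mult S T) = op_mult (adj T) (adj S)" by (rule adj_mult)
  with mult.IH mult.hyps show ?case
    by (simp add: is_derivationD(3)[OF d] is_derivationD(3)[OF d'] star_alg.star)
next
  case (star T)
  obtain T' where "adjoint_pair T T'" using adjoints star.hyps by blast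
  then have "adj (adj T) = T" by (rule adj_adj)
  then show ?case using star.IH by (simp only:)
qed

definition gensAc :: "'g::topological_ab_group_add \<Rightarrow> op set" where
  "gensAc x1 = {shiftU, adj shiftU} \<union> {Mplus x1 chi | chi. character chi}"

lemma algAc_eq: "algAc x1 = star_alg (gensAc x1)"
  by (simp add: algAc_def gensAc_def)

lemma character_cnj:
  assumes "character chi" shows "character (\<lambda>g. cnj (chi g))"
  using assms unfolding character_def
  by (auto intro: continuous_on_cnj)

lemma character_norm: "character chi \<Longrightarrow> cmod (chi g) = 1"
  by (simp add: character_def)

lemma adjoint_pair_Mplus:
  assumes "character chi" shows "adjoint_pair (Mplus x1 chi) (Mplus x1 (\<lambda>g. cnj (chi g)))"
  unfolding Mplus_def
  using adjoint_pair_diag[of "\<lambda>k. chi (nmul k x1)" 1] character_norm[OF assms] by simp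

lemma banded_Mplus:
  assumes "character chi" shows "banded 0 (Mplus x1 chi)"
  unfolding Mplus_def
  using banded_diag[of "\<lambda>k. chi (nmul k x1)" 1] character_norm[OF assms] by simp

lemma gensAc_banded_adjoint:
  assumes "g \<in> gensAc x1"
  shows "(\<exists>R. banded R g) \<and> (\<exists>g'\<in>star_alg (gensAc x1). adjoint_pair g g' \<and> (\<exists>R. banded R g'))"
proof -
  have U: "shiftU \<in> star_alg (gensAc x1)" "adj shiftU \<in> star_alg (gensAc x1)"
    by (auto intro: star_alg.gen simp: gensAc_def)
  consider "g = shiftU" | "g = adj shiftU" | chi where "character chi" "g = Mplus x1 chi"
    using assms by (auto simp: gensAc_def)
  then show ?thesis
  proof cases
    case 1
    with U show ?thesis using banded_shiftU banded_backshift adjoint_pair_shift adj_shiftU by auto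
  next
    case 2
    with U show ?thesis using banded_shiftU banded_backshift adjoint_pair_backshift adj_shiftU by auto
  next
    case (3 chi)
    have "Mplus x1 (\<lambda>g. cnj (chi g)) \<in> star_alg (gensAc x1)"
      using character_cnj[OF 3(1)] by (auto intro: star_alg.gen simp: gensAc_def)
    with 3 show ?thesis using adjoint_pair_Mplus banded_Mplus character_cnj by blast
  qed
qed

lemma algAc_banded: "T \<in> algAc x1 \<Longrightarrow> \<exists>R. banded R T"
  using star_alg_banded_adjoint[OF gensAc_banded_adjoint] by (auto simp: algAc_eq)

lemma algAc_is_op: "T \<in> algAc x1 \<Longrightarrow> is_op T"
  using algAc_banded bandedD(1) by blast

lemma algAc_adjoint_pair: "T \<in> algAc x1 \<Longrightarrow> \<exists>T'. adjoint_pair T T'"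
  using star_alg_banded_adjoint[OF gensAc_banded_adjoint] by (auto simp: algAc_eq)

lemma diag_zero_add: "op_add (diag (\<lambda>k. 0)) T = T"
  by (rule ext, rule ext) (simp add: diag_def op_add_apply)

lemma Mplus_algA0:
  assumes "character chi" shows "Mplus x1 chi \<in> algA0 x1"
proof -
  have "chi \<in> char_span"
    unfolding char_span_def
    by (rule CollectI, rule exI[of _ "{chi}"], rule exI[of _ "\<lambda>_. 1"]) (use assms in auto)
  thus ?thesis unfolding algA0_def using diag_zero_add[of "Mplus x1 chi"]
    by (intro CollectI exI[of _ "\<lambda>k. 0"] exI[of _ chi]) auto
qed

lemma dalpha_conds_unique:
  assumes "is_derivation (algAc x1) B d" "is_derivation (algAc x1) B d'"
    and "dalpha_conds x1 \<alpha> d" "dalpha_conds x1 \<alpha> d'"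
    and "T \<in> algAc x1"
  shows "d' T = d T"
proof -
  have "d' g = d g \<and> d' (adj g) = d (adj g)" if g: "g \<in> gensAc x1" for g
  proof (cases "g = shiftU \<or> g = adj shiftU")
    case True
    have "adj (adj shiftU) = shiftU" by (simp add: adj_shiftU adj_backshift)
    with True assms(3,4) show ?thesis by (auto simp: dalpha_conds_def)
  next
    case False
    then obtain chi where chi: "character chi" "g = Mplus x1 chi" using g by (auto simp: gensAc_def)
    then have "adj g = Mplus x1 (\<lambda>g. cnj (chi g))" using adj_eq[OF adjoint_pair_Mplus] by simp
    with chi have "g \<in> algA0 x1" "adj g \<in> algA0 x1" by (auto intro: Mplus_algA0 character_cnj)
    with assms(3,4) show ?thesis by (simp add: dalpha_conds_def)
  qed
  then show ?thesis
    using derivations_eq_on_star_alg[of "gensAc x1" B d d' T] assms algAc_adjoint_pair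
    unfolding algAc_eq by blast
qed

lemma diagonal_dalpha_eq_zero:
  assumes "\<And>m n. n \<noteq> m \<Longrightarrow> entry a m n = 0"
  shows "dalpha \<alpha> a = op_zero"
proof (rule ext, rule ext)
  fix x m
  have "(\<Sum>n\<in>{n. entry a m n \<noteq> 0}. psum_diff \<alpha> m n * entry a m n * x n) = 0"
  proof (rule sum.neutral, rule ballI)
    fix n assume "n \<in> {n. entry a m n \<noteq> 0}"
    hence "n = m" using assms by blast
    thus "psum_diff \<alpha> m n * entry a m n * x n = 0" by simp
  qed
  thus "dalpha \<alpha> a x m = op_zero x m" by (simp add: dalpha_def op_zero_def)
qed

lemma psum_diff_Suc_self: "psum_diff \<alpha> (Suc k) k = \<alpha> k"
  by (simp add: psum_diff_def psum_def)

lemma psum_diff_self_Suc: "psum_diff \<alpha> k (Suc k) = - \<alpha> k"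
  by (simp add: psum_diff_def psum_def)

lemma dalpha_shiftU:
  assumes "\<And>i. cmod (\<alpha> i) \<le> B"
  shows "dalpha \<alpha> shiftU = op_mult shiftU (diag \<alpha>)"
proof (rule ext, rule ext)
  fix x m
  show "dalpha \<alpha> shiftU x m = op_mult shiftU (diag \<alpha>) x m"
  proof (cases "x \<in> l2")
    case True
    have dx: "diag \<alpha> x \<in> l2" using is_opD(1)[OF is_op_diag[OF assms] True] .
    show ?thesis
    proof (cases m)
      case 0
      have "dalpha \<alpha> shiftU x m = 0" using dalpha_apply[OF banded_shiftU True, of \<alpha> m] 0
        by (simp add: entry_shiftU)
      thus ?thesis using dx 0 by (simp add: shiftU_def op_mult_apply)
    next
      case (Suc k)
      have "dalpha \<alpha> shiftU x m = (\<Sum>n\<in>window 1 m. if n = k then \<alpha> k * x k else 0)"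
        unfolding dalpha_apply[OF banded_shiftU True]
        by (intro sum.cong refl) (auto simp: entry_shiftU psum_diff_Suc_self Suc)
      also have "\<dots> = \<alpha> k * x k" by (simp add: window_iff Suc)
      finally show ?thesis using dx True Suc by (simp add: shiftU_def diag_def op_mult_apply)
    qed
  next
    case False
    thus ?thesis using is_op_zero[OF is_op_shiftU] by (simp add: dalpha_out diag_def op_mult_apply)
  qed
qed

lemma dalpha_backshift:
  assumes "\<And>i. cmod (\<alpha> i) \<le> B"
  shows "dalpha \<alpha> backshift = op_neg (op_mult (diag \<alpha>) backshift)"
proof (rule ext, rule ext)
  fix x m
  show "dalpha \<alpha> backshift x m = op_neg (op_mult (diag \<alpha>) backshift) x m"
  proof (cases "x \<in> l2")
    case True
    have ux: "backshift x \<in> l2" using is_opD(1)[OF is_op_backshift True] .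
    have "dalpha \<alpha> backshift x m = (\<Sum>n\<in>window 1 m. if n = Suc m then - \<alpha> m * x (Suc m) else 0)"
      unfolding dalpha_apply[OF banded_backshift True]
      by (intro sum.cong refl) (auto simp: entry_backshift psum_diff_self_Suc)
    also have "\<dots> = - \<alpha> m * x (Suc m)" by (simp add: window_iff)
    finally show ?thesis using ux True by (simp add: backshift_def diag_def op_mult_apply op_neg_apply)
  next
    case False
    thus ?thesis using is_op_zero[OF is_op_diag[OF assms]]
      by (simp add: dalpha_out backshift_def op_mult_apply op_neg_apply)
  qed
qed

lemma dalpha_algA0: "a \<in> algA0 x1 \<Longrightarrow> dalpha \<alpha> a = op_zero"
  by (auto simp: algA0_def entry_add entry_diag Mplus_def intro: diagonal_dalpha_eq_zero)

lemma dalpha_satisfies_conds: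
  assumes "\<And>i. cmod (\<alpha> i) \<le> B"
  shows "dalpha_conds x1 \<alpha> (dalpha \<alpha>)"
  using dalpha_shiftU[of \<alpha>, OF assms] dalpha_backshift[of \<alpha>, OF assms] dalpha_algA0
  by (auto simp: dalpha_conds_def adj_shiftU)

section \<open>Approximating d_alpha by inner derivations\<close>

text \<open>inner_approx alpha j is x_j = beta_j(K), a finite combination of the projections
  tail_proj k = U^k U*^k, hence an element of the algebra.\<close>

definition tail_proj :: "nat \<Rightarrow> op" where "tail_proj k = diag (\<lambda>m. if k \<le> m then 1 else 0)"
definition trunc :: "(nat \<Rightarrow> complex) \<Rightarrow> nat \<Rightarrow> nat \<Rightarrow> complex" where "trunc \<alpha> j i = (if i < j then \<alpha> i else 0)"
definition inner_approx :: "(nat \<Rightarrow> complex) \<Rightarrow> nat \<Rightarrow> op" where "inner_approx \<alpha> j = diag (psum (trunc \<alpha> j))"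

lemma shiftU_in: "shiftU \<in> star_alg (gensAc x1)" by (rule star_alg.gen) (simp add: gensAc_def)
lemma backshift_in: "backshift \<in> star_alg (gensAc x1)"
  using star_alg.gen[of "adj shiftU" "gensAc x1"] by (simp add: gensAc_def adj_shiftU)

lemma tail_proj_0: "tail_proj 0 = op_mult backshift shiftU"
proof (rule ext)
  fix x show "tail_proj 0 x = op_mult backshift shiftU x"
  proof (cases "x \<in> l2")
    case True
    thus ?thesis using is_opD(1)[OF is_op_shiftU True]
      by (simp add: tail_proj_def diag_def op_mult_apply backshift_def shiftU_def)
  next
    case False
    thus ?thesis using is_op_zero[OF is_op_backshift] by (simp add: tail_proj_def diag_def op_mult_apply shiftU_def)
  qed
qed

lemma is_op_tail_proj: "is_op (tail_proj k)"
  unfolding tail_proj_def by (rule is_op_diag[of _ 1]) simp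

lemma tail_proj_Suc: "tail_proj (Suc k) = op_mult shiftU (op_mult (tail_proj k) backshift)"
proof (rule ext)
  fix x show "tail_proj (Suc k) x = op_mult shiftU (op_mult (tail_proj k) backshift) x"
  proof (cases "x \<in> l2")
    case True
    have u: "backshift x \<in> l2" using is_opD(1)[OF is_op_backshift True] .
    have q: "tail_proj k (backshift x) \<in> l2" using is_opD(1)[OF is_op_tail_proj u] .
    show ?thesis
    proof (rule ext)
      fix m show "tail_proj (Suc k) x m = op_mult shiftU (op_mult (tail_proj k) backshift) x m"
        using True u q by (cases m) (auto simp: tail_proj_def diag_def op_mult_apply backshift_def shiftU_def)
    qed
  next
    case False
    thus ?thesis using is_op_zero[OF is_op_shiftU] is_op_zero[OF is_op_tail_proj]
      by (simp add: tail_proj_def diag_def op_mult_apply backshift_def)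
  qed
qed

lemma tail_proj_in: "tail_proj k \<in> star_alg (gensAc x1)"
proof (induction k)
  case 0 show ?case unfolding tail_proj_0 by (intro star_alg.mult backshift_in shiftU_in)
next
  case (Suc k) show ?case unfolding tail_proj_Suc by (intro star_alg.mult backshift_in shiftU_in Suc)
qed

lemma psum_trunc_Suc: "psum (trunc \<alpha> (Suc j)) m = psum (trunc \<alpha> j) m + \<alpha> j * (if Suc j \<le> m then 1 else 0)"
proof -
  have "psum (trunc \<alpha> (Suc j)) m = (\<Sum>i<m. trunc \<alpha> j i + (if i = j then \<alpha> j else 0))"
    unfolding psum_def by (intro sum.cong refl) (auto simp: trunc_def)
  also have "\<dots> = psum (trunc \<alpha> j) m + (\<Sum>i<m. if i = j then \<alpha> j else 0)"
    by (simp add: sum.distrib psum_def)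
  also have "(\<Sum>i<m. if i = j then \<alpha> j else 0) = \<alpha> j * (if Suc j \<le> m then 1 else 0)"
    by simp
  finally show ?thesis .
qed

lemma inner_approx_in: "inner_approx \<alpha> j \<in> star_alg (gensAc x1)"
proof (induction j)
  case 0
  have "inner_approx \<alpha> 0 = op_scale 0 shiftU"
    by (rule ext, rule ext) (simp add: inner_approx_def diag_def psum_def trunc_def op_scale_apply)
  thus ?case using star_alg.scale[OF shiftU_in] by simp
next
  case (Suc j)
  have "inner_approx \<alpha> (Suc j) = op_add (inner_approx \<alpha> j) (op_scale (\<alpha> j) (tail_proj (Suc j)))"
    by (rule ext, rule ext) (simp add: inner_approx_def diag_def psum_trunc_Suc tail_proj_def op_scale_apply op_add_apply algebra_simps)
  thus ?case using star_alg.add[OF Suc star_alg.scale[OF tail_proj_in]] by simp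
qed

lemma is_op_inner_approx: "is_op (inner_approx \<alpha> j)"
  using algAc_is_op[OF inner_approx_in[folded algAc_eq]] .

definition gensA :: "'g::topological_ab_group_add \<Rightarrow> op set" where
  "gensA x1 = {shiftU} \<union> {Mplus x1 f | f. continuous_on UNIV f}"

lemma algA_eq: "algA x1 = norm_closure (star_alg (gensA x1))"
  by (simp add: algA_def gensA_def)

lemma algAc_subset_gensA: "T \<in> algAc x1 \<Longrightarrow> T \<in> star_alg (gensA x1)"
  unfolding algAc_eq
proof (erule star_alg_subset)
  fix g assume "g \<in> gensAc x1"
  moreover have "shiftU \<in> star_alg (gensA x1)" by (rule star_alg.gen) (simp add: gensA_def)
  moreover have "Mplus x1 chi \<in> star_alg (gensA x1)" if "character chi" for chi
    using that by (intro star_alg.gen) (auto simp: gensA_def character_def)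
  ultimately show "g \<in> star_alg (gensA x1)"
    unfolding gensAc_def by (auto intro: star_alg.star)
qed

lemma opnorm_zero_op: "opnorm (\<lambda>x n. 0) \<le> 0"
  by (rule opnorm_le) auto

lemma star_alg_gensA_subset_algA:
  assumes "T \<in> star_alg (gensA x1)" "is_op T" shows "T \<in> algA x1"
  unfolding algA_eq norm_closure_def
proof (intro CollectI conjI allI impI)
  fix e :: real assume "0 < e"
  have "op_diff T T = (\<lambda>x n. 0)" by (rule ext, rule ext) (simp add: op_apply)
  hence "opnorm (op_diff T T) < e" using opnorm_zero_op \<open>0 < e\<close> by simp
  thus "\<exists>R\<in>star_alg (gensA x1). opnorm (op_diff T R) < e" using assms(1) by blast
qed (rule assms(2))

lemma algAc_subset_algA: "T \<in> algAc x1 \<Longrightarrow> T \<in> algA x1"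
  by (intro star_alg_gensA_subset_algA algAc_subset_gensA algAc_is_op)

definition commutator :: "op \<Rightarrow> op \<Rightarrow> op" where "commutator X a = op_diff (op_mult X a) (op_mult a X)"

lemma commutator_in: "X \<in> star_alg Y \<Longrightarrow> a \<in> star_alg Y \<Longrightarrow> commutator X a \<in> star_alg Y"
proof -
  assume h: "X \<in> star_alg Y" "a \<in> star_alg Y"
  have "commutator X a = op_add (op_mult X a) (op_scale (-1) (op_mult a X))"
    by (rule ext, rule ext) (simp add: op_apply commutator_def op_add_apply op_scale_apply)
  thus ?thesis using h by (simp add: star_alg.intros)
qed

lemma commutator_minus_dalpha_apply:
  assumes a: "banded R a" and x: "x \<in> l2"
  shows "op_diff (commutator (inner_approx \<alpha> j) a) (dalpha \<alpha> a) x m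
     = (\<Sum>n\<in>window R m. psum_diff (\<lambda>i. trunc \<alpha> j i - \<alpha> i) m n * entry a m n * x n)"
proof -
  have opa: "is_op a" using bandedD(1)[OF a] .
  have ax: "a x \<in> l2" using is_opD(1)[OF opa x] .
  have xx: "inner_approx \<alpha> j x \<in> l2" using is_opD(1)[OF is_op_inner_approx x] .
  have e1: "op_mult (inner_approx \<alpha> j) a x m = (\<Sum>n\<in>window R m. psum (trunc \<alpha> j) m * entry a m n * x n)"
    using ax bandedD(3)[OF a x, of m] by (simp add: op_mult_apply inner_approx_def diag_def sum_distrib_left mult.assoc)
  have e2: "op_mult a (inner_approx \<alpha> j) x m = (\<Sum>n\<in>window R m. psum (trunc \<alpha> j) n * entry a m n * x n)"
    using x bandedD(3)[OF a xx, of m] by (simp add: op_mult_apply inner_approx_def diag_def mult_ac)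
  have psum_diff: "psum_diff (\<lambda>i. trunc \<alpha> j i - \<alpha> i) m n = psum (trunc \<alpha> j) m - psum (trunc \<alpha> j) n - psum_diff \<alpha> m n" for n
    by (simp add: psum_diff_def psum_def sum_subtractf)
  show ?thesis
    unfolding commutator_def op_diff_apply e1 e2 dalpha_apply[OF a x]
    by (simp add: psum_diff sum_subtractf[symmetric] algebra_simps)
qed

lemma opnorm_diff_commute: "opnorm (op_diff S T) = opnorm (op_diff T S)"
  by (simp add: opnorm_def l2norm_def op_diff_def norm_minus_commute)

lemma commutator_minus_dalpha_bound:
  assumes a: "banded R a" and M: "\<And>m n. cmod (entry a m n) \<le> M"
    and \<epsilon>: "\<And>i. i \<ge> j \<Longrightarrow> cmod (\<alpha> i) \<le> \<epsilon>" and \<epsilon>0: "0 \<le> \<epsilon>"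
  shows "opnorm (op_diff (commutator (inner_approx \<alpha> j) a) (dalpha \<alpha> a)) \<le> (2 * real R + 1) * (R * \<epsilon> * M)"
    and "0 \<le> opnorm (op_diff (commutator (inner_approx \<alpha> j) a) (dalpha \<alpha> a))"
proof -
  let ?g = "\<lambda>i. trunc \<alpha> j i - \<alpha> i"
  have g: "cmod (?g i) \<le> \<epsilon>" for i using \<epsilon>[of i] \<epsilon>0 by (auto simp: trunc_def)
  have M0: "0 \<le> M" using M[of 0 0] norm_ge_zero[of "entry a 0 0"] by linarith
  have entries: "cmod (psum_diff ?g m n * entry a m n) \<le> R * \<epsilon> * M" if "n \<in> window R m" for m n
  proof -
    have "cmod (psum_diff ?g m n) * cmod (entry a m n) \<le> (R * \<epsilon>) * M"
      using psum_diff_bound[of ?g \<epsilon>, OF g that] M[of m n] M0 \<epsilon>0 by (intro mult_mono) auto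
    then show ?thesis by (simp add: norm_mult)
  qed
  have expansion: "op_diff (commutator (inner_approx \<alpha> j) a) (dalpha \<alpha> a) x m
      = (\<Sum>n\<in>window R m. (psum_diff ?g m n * entry a m n) * x n)" if "x \<in> l2" for x m
    using commutator_minus_dalpha_apply[OF a that] by (simp add: mult.assoc)
  show "opnorm (op_diff (commutator (inner_approx \<alpha> j) a) (dalpha \<alpha> a)) \<le> (2 * real R + 1) * (R * \<epsilon> * M)"
    and "0 \<le> opnorm (op_diff (commutator (inner_approx \<alpha> j) a) (dalpha \<alpha> a))"
    using opnorm_banded_le[OF expansion entries] by auto
qed

lemma commutator_inner_approx_tendsto:
  assumes a: "banded R a" and \<alpha>: "\<alpha> \<longlonglongrightarrow> 0"
  shows "(\<lambda>j. opnorm (op_diff (commutator (inner_approx \<alpha> j) a) (dalpha \<alpha> a))) \<longlonglongrightarrow> 0"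
proof (rule LIMSEQ_I)
  fix r :: real assume r: "0 < r"
  obtain M where M: "\<And>m n. cmod (entry a m n) \<le> M" using bandedD(4)[OF a] by blast
  define K where "K = (2 * real R + 1) * (R * M)"
  have "0 \<le> M" using M[of 0 0] norm_ge_zero[of "entry a 0 0"] by linarith
  then have K0: "0 \<le> K" by (simp add: K_def)
  define \<epsilon> where "\<epsilon> = r / (K + 1)"
  have \<epsilon>0: "0 < \<epsilon>" using r K0 by (simp add: \<epsilon>_def)
  have "K * \<epsilon> = r * (K / (K + 1))" using K0 by (simp add: \<epsilon>_def field_simps)
  also have "\<dots> < r * 1" using r K0 by (intro mult_strict_left_mono) auto
  finally have K\<epsilon>: "K * \<epsilon> < r" by simp
  obtain J where J: "\<And>i. i \<ge> J \<Longrightarrow> cmod (\<alpha> i) < \<epsilon>" using LIMSEQ_D[OF \<alpha> \<epsilon>0] by auto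
  have "norm (opnorm (op_diff (commutator (inner_approx \<alpha> j) a) (dalpha \<alpha> a)) - 0) < r" if "J \<le> j" for j
  proof -
    have "\<And>i. i \<ge> j \<Longrightarrow> cmod (\<alpha> i) \<le> \<epsilon>" using J that by (meson less_imp_le order_trans)
    from commutator_minus_dalpha_bound[where j=j and \<alpha>=\<alpha> and \<epsilon>=\<epsilon>, OF a M this less_imp_le[OF \<epsilon>0]]
    show ?thesis
      using K\<epsilon> by (simp add: K_def algebra_simps)
  qed
  then show "\<exists>J. \<forall>j\<ge>J. norm (opnorm (op_diff (commutator (inner_approx \<alpha> j) a) (dalpha \<alpha> a)) - 0) < r"
    by blast
qed

lemma dalpha_in_algA:
  assumes a: "a \<in> algAc x1" and \<alpha>: "\<alpha> \<longlonglongrightarrow> 0" and B: "\<And>i. cmod (\<alpha> i) \<le> B"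
  shows "dalpha \<alpha> a \<in> algA x1"
  unfolding algA_eq norm_closure_def
proof (intro CollectI conjI allI impI)
  obtain R where aR: "banded R a" using algAc_banded[OF a] by blast
  then show "is_op (dalpha \<alpha> a)" by (rule is_op_dalpha[OF _ B])
  fix e :: real assume "0 < e"
  then obtain j where "norm (opnorm (op_diff (commutator (inner_approx \<alpha> j) a) (dalpha \<alpha> a)) - 0) < e"
    using LIMSEQ_D[OF commutator_inner_approx_tendsto[OF aR \<alpha>]] by blast
  then have "opnorm (op_diff (commutator (inner_approx \<alpha> j) a) (dalpha \<alpha> a)) < e" by simp
  moreover have "commutator (inner_approx \<alpha> j) a \<in> star_alg (gensA x1)"
    using commutator_in[OF inner_approx_in a[unfolded algAc_eq]]
    by (intro algAc_subset_gensA) (simp add: algAc_eq)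
  ultimately show "\<exists>R\<in>star_alg (gensA x1). opnorm (op_diff (dalpha \<alpha> a) R) < e"
    by (metis opnorm_diff_commute)
qed

lemma dalpha_approx_inner:
  assumes "\<alpha> \<longlonglongrightarrow> 0"
  shows "approx_inner (algAc x1) (algA x1) (dalpha \<alpha>)"
  unfolding approx_inner_def
proof (intro exI[of _ "inner_approx \<alpha>"] conjI allI ballI)
  show "inner_approx \<alpha> j \<in> algA x1" for j
    using algAc_subset_algA inner_approx_in[folded algAc_eq] by blast
  fix a assume "a \<in> algAc x1"
  then obtain R where "banded R a" using algAc_banded by blast
  from commutator_inner_approx_tendsto[OF this assms]
  show "(\<lambda>j. opnorm (op_diff (op_diff (op_mult (inner_approx \<alpha> j) a) (op_mult a (inner_approx \<alpha> j))) (dalpha \<alpha> a))) \<longlonglongrightarrow> 0"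
    by (simp add: commutator_def)
qed

section \<open>Invariance under the gauge action\<close>

definition phase :: "real \<Rightarrow> nat \<Rightarrow> complex" where
  "phase t k = exp (\<i> * complex_of_real (t * real k))"

lemma expK_phase: "expK t = diag (phase t)" by (simp only: expK_def phase_def[abs_def])

lemma norm_phase: "cmod (phase t k) = 1"
  unfolding phase_def by (rule norm_exp_i_times)

lemma phase_inverse: "phase (- t) k * phase t k = 1"
  unfolding phase_def by (simp add: exp_add[symmetric] algebra_simps)

lemma banded_expK: "banded 0 (expK t)"
  unfolding expK_phase by (rule banded_diag[of _ 1]) (simp add: norm_phase)

lemma is_op_expK: "is_op (expK t)"
  using bandedD(1)[OF banded_expK] .

lemma diag_unit_vec: "diag b (unit_vec n) = (\<lambda>k. b n * unit_vec n k)"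
  by (rule ext) (simp add: diag_def unit_vec_l2, simp add: unit_vec_def)

lemma entry_rho:
  assumes opa: "is_op a"
  shows "entry (rho \<theta> a) m n = phase \<theta> m * (phase (- \<theta>) n * entry a m n)"
proof -
  have "expK (- \<theta>) (unit_vec n) = (\<lambda>k. phase (- \<theta>) n * unit_vec n k)" by (simp add: expK_phase diag_unit_vec)
  hence "a (expK (- \<theta>) (unit_vec n)) = (\<lambda>k. phase (- \<theta>) n * a (unit_vec n) k)"
    using is_op_scale_vec[OF opa unit_vec_l2] by simp
  moreover have "a (unit_vec n) \<in> l2" using is_opD(1)[OF opa unit_vec_l2] .
  ultimately show ?thesis
    by (simp add: rho_def entry_def op_mult_apply expK_phase diag_def l2_scale)
qed

lemma banded_rho: "banded R a \<Longrightarrow> banded R (rho \<theta> a)"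
  using banded_mult[OF banded_expK banded_mult[OF _ banded_expK]] by (simp add: rho_def)

lemma dalpha_rho_apply:
  assumes a: "banded R a" and x: "x \<in> l2"
  shows "dalpha \<alpha> (rho \<theta> a) (expK \<theta> x) m = phase \<theta> m * dalpha \<alpha> a x m"
proof -
  have y: "expK \<theta> x \<in> l2" using is_opD(1)[OF is_op_expK x] .
  have yv: "expK \<theta> x n = phase \<theta> n * x n" for n using x by (simp add: expK_phase diag_def)
  have "dalpha \<alpha> (rho \<theta> a) (expK \<theta> x) m
      = (\<Sum>n\<in>window R m. psum_diff \<alpha> m n * entry (rho \<theta> a) m n * expK \<theta> x n)"
    by (rule dalpha_apply[OF banded_rho[OF a] y])
  also have "\<dots> = (\<Sum>n\<in>window R m. phase \<theta> m * (psum_diff \<alpha> m n * entry a m n * x n))"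
  proof (intro sum.cong refl)
    fix n
    have "phase (- \<theta>) n * phase \<theta> n = 1" by (rule phase_inverse)
    then show "psum_diff \<alpha> m n * entry (rho \<theta> a) m n * expK \<theta> x n
        = phase \<theta> m * (psum_diff \<alpha> m n * entry a m n * x n)"
      unfolding entry_rho[OF bandedD(1)[OF a]] yv
      by (metis (no_types, lifting) mult.assoc mult.commute mult.left_commute mult_1_right)
  qed
  also have "\<dots> = phase \<theta> m * dalpha \<alpha> a x m"
    by (simp add: dalpha_apply[OF a x] sum_distrib_left)
  finally show ?thesis .
qed

lemma dalpha_invariant:
  assumes a: "banded R a" and B: "\<And>i. cmod (\<alpha> i) \<le> B"
  shows "rho_inv \<theta> (dalpha \<alpha> (rho \<theta> a)) = dalpha \<alpha> a"
proof (rule ext)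
  fix x
  show "rho_inv \<theta> (dalpha \<alpha> (rho \<theta> a)) x = dalpha \<alpha> a x"
  proof (cases "x \<in> l2")
    case True
    have z: "dalpha \<alpha> (rho \<theta> a) (expK \<theta> x) \<in> l2"
      using is_opD(1)[OF is_op_dalpha[OF banded_rho[OF a] B] is_opD(1)[OF is_op_expK True]] .
    have "rho_inv \<theta> (dalpha \<alpha> (rho \<theta> a)) x m = phase (- \<theta>) m * dalpha \<alpha> (rho \<theta> a) (expK \<theta> x) m" for m
      using z by (simp add: rho_inv_def op_mult_apply expK_phase[of "- \<theta>"] diag_def)
    also have "\<dots> m = phase (- \<theta>) m * phase \<theta> m * dalpha \<alpha> a x m" for m
      by (simp add: dalpha_rho_apply[OF a True])
    finally show ?thesis by (simp add: phase_inverse fun_eq_iff)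
  next
    case False
    have "expK \<theta> x = (\<lambda>n. 0)" using False by (simp add: expK_phase diag_def)
    then show ?thesis
      using False by (simp add: rho_inv_def op_mult_apply dalpha_zero dalpha_out expK_phase diag_def)
  qed
qed

lemma dalpha_derivation:
  assumes \<alpha>: "\<alpha> \<longlonglongrightarrow> 0" and B: "\<And>i. cmod (\<alpha> i) \<le> B"
  shows "is_derivation (algAc x1) (algA x1) (dalpha \<alpha>)"
  unfolding is_derivation_def
proof (intro conjI ballI allI)
  fix a assume a: "a \<in> algAc x1"
  show "dalpha \<alpha> a \<in> algA x1" by (rule dalpha_in_algA[OF a \<alpha> B])
  obtain R where "banded R a" using algAc_banded[OF a] by blast
  then show "dalpha \<alpha> (op_scale c a) = op_scale c (dalpha \<alpha> a)" for c by (rule dalpha_scale)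
next
  fix a b assume "a \<in> algAc x1" "b \<in> algAc x1"
  then obtain R1 R2 where a: "banded R1 a" and b: "banded R2 b" using algAc_banded by blast
  then have "banded (max R1 R2) a" "banded (max R1 R2) b" by (auto elim: banded_mono)
  then show "dalpha \<alpha> (op_add a b) = op_add (dalpha \<alpha> a) (dalpha \<alpha> b)" by (rule dalpha_add)
  show "dalpha \<alpha> (op_mult a b) = op_add (op_mult (dalpha \<alpha> a) b) (op_mult a (dalpha \<alpha> b))"
    using a b B by (rule dalpha_mult)
qed

lemma dalpha_invariant_der:
  assumes "\<And>i. cmod (\<alpha> i) \<le> B"
  shows "invariant_der (algAc x1) (dalpha \<alpha>)"
  unfolding invariant_der_def
proof (intro allI ballI)
  fix \<theta> a assume "a \<in> algAc x1"
  then obtain R where "banded R a" using algAc_banded by blast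
  then show "rho_inv \<theta> (dalpha \<alpha> (rho \<theta> a)) = dalpha \<alpha> a" using assms by (rule dalpha_invariant)
qed

theorem lemma3p1:
  fixes x1 :: "'g::{topological_ab_group_add, t2_space}"
    and \<alpha> :: "nat \<Rightarrow> complex"
  assumes "compact (UNIV :: 'g set)"
    and "infinite (UNIV :: 'g set)"
    and "closure (range (\<lambda>k::int. zmul k x1)) = UNIV"
    and "\<alpha> \<longlonglongrightarrow> 0"
  shows "\<exists>d. is_derivation (algAc x1) (algA x1) d \<and> dalpha_conds x1 \<alpha> d
           \<and> (\<forall>d'. is_derivation (algAc x1) (algA x1) d' \<and> dalpha_conds x1 \<alpha> d'
                   \<longrightarrow> (\<forall>a\<in>algAc x1. d' a = d a))
           \<and> approx_inner (algAc x1) (algA x1) d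
           \<and> invariant_der (algAc x1) d"
proof -
  note \<alpha> = \<open>\<alpha> \<longlonglongrightarrow> 0\<close>
  obtain B where B: "\<And>i. cmod (\<alpha> i) \<le> B"
    using convergent_imp_Bseq[OF convergentI[OF \<alpha>]] by (meson BseqE)
  have der: "is_derivation (algAc x1) (algA x1) (dalpha \<alpha>)" using \<alpha> B by (rule dalpha_derivation)
  have conds: "dalpha_conds x1 \<alpha> (dalpha \<alpha>)" using B by (rule dalpha_satisfies_conds)
  show ?thesis
  proof (intro exI[of _ "dalpha \<alpha>"] conjI allI impI ballI der conds)
    fix d' a assume "is_derivation (algAc x1) (algA x1) d' \<and> dalpha_conds x1 \<alpha> d'" "a \<in> algAc x1"
    then show "d' a = dalpha \<alpha> a" using dalpha_conds_unique[OF der _ conds] by blast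
  next
    show "approx_inner (algAc x1) (algA x1) (dalpha \<alpha>)" using \<alpha> by (rule dalpha_approx_inner)
    show "invariant_der (algAc x1) (dalpha \<alpha>)" using B by (rule dalpha_invariant_der)
  qed
qed

end
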